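(* Let $\mathcal E$ be a Hilbert space, $P$ an orthogonal projection and $U$ a unitary on $\mathcal E$, and let $\varphi_1(z)=U^*(P^\perp+zP)$, $\varphi_2(z)=(P+zP^\perp)U$ for $z\in\mathbb D$. Then the pair $(M_{\varphi_1},M_{\varphi_2})$ of multiplication operators on $H^2_{\mathbb D}(\mathcal E)$ has a non-trivial joint reducing subspace if and only if $(P,U)$ has a non-trivial joint reducing subspace.
   Context: $P^\perp=I-P$. $H^2_{\mathbb D}(\mathcal E)$ is the Hilbert space of $\mathcal E$-valued analytic functions $\sum_{n\ge0}a_nz^n$ on the unit disc with $\sum\|a_n\|^2<\infty$, identified with $H^2_{\mathbb D}\otimes\mathcal E$; $M_{\varphi_i}f(z)=\varphi_i(z)f(z)$. A joint reducing subspace of a pair of operators is a closed subspace reducing both; non-trivial means different from $\{0\}$ and the whole space. *)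

theory Defs
  imports "HOL-Analysis.Analysis"
begin

(* A Hilbert space E is modelled (up to unitary equivalence) as l^2(I) for an index set I. *)

definition l2 :: "'i set \<Rightarrow> ('i \<Rightarrow> complex) set" where
  "l2 I = {x. (\<forall>i. i \<notin> I \<longrightarrow> x i = 0) \<and> (\<lambda>i. (cmod (x i))^2) summable_on I}"

definition l2_inner :: "'i set \<Rightarrow> ('i \<Rightarrow> complex) \<Rightarrow> ('i \<Rightarrow> complex) \<Rightarrow> complex" where
  "l2_inner I x y = infsum (\<lambda>i. x i * cnj (y i)) I"

definition l2_norm :: "'i set \<Rightarrow> ('i \<Rightarrow> complex) \<Rightarrow> real" where
  "l2_norm I x = sqrt (infsum (\<lambda>i. (cmod (x i))^2) I)"

definition l2_linear :: "'i set \<Rightarrow> (('i \<Rightarrow> complex) \<Rightarrow> ('i \<Rightarrow> complex)) \<Rightarrow> bool" where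
  "l2_linear I T \<longleftrightarrow> (\<forall>x\<in>l2 I. T x \<in> l2 I)
     \<and> (\<forall>x\<in>l2 I. \<forall>y\<in>l2 I. T (\<lambda>i. x i + y i) = (\<lambda>i. T x i + T y i))
     \<and> (\<forall>c. \<forall>x\<in>l2 I. T (\<lambda>i. c * x i) = (\<lambda>i. c * T x i))"

definition orth_proj :: "'i set \<Rightarrow> (('i \<Rightarrow> complex) \<Rightarrow> ('i \<Rightarrow> complex)) \<Rightarrow> bool" where
  "orth_proj I P \<longleftrightarrow> l2_linear I P \<and> (\<forall>x\<in>l2 I. P (P x) = P x)
     \<and> (\<forall>x\<in>l2 I. \<forall>y\<in>l2 I. l2_inner I (P x) y = l2_inner I x (P y))"

definition unitary_op :: "'i set \<Rightarrow> (('i \<Rightarrow> complex) \<Rightarrow> ('i \<Rightarrow> complex)) \<Rightarrow> bool" where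
  "unitary_op I U \<longleftrightarrow> l2_linear I U \<and> U ` l2 I = l2 I
     \<and> (\<forall>x\<in>l2 I. \<forall>y\<in>l2 I. l2_inner I (U x) (U y) = l2_inner I x y)"

definition l2_adj :: "'i set \<Rightarrow> (('i \<Rightarrow> complex) \<Rightarrow> ('i \<Rightarrow> complex)) \<Rightarrow> ('i \<Rightarrow> complex) \<Rightarrow> ('i \<Rightarrow> complex)" where
  "l2_adj I T y = (THE z. z \<in> l2 I \<and> (\<forall>x\<in>l2 I. l2_inner I (T x) y = l2_inner I x z))"

definition l2_orth :: "'i set \<Rightarrow> ('i \<Rightarrow> complex) set \<Rightarrow> ('i \<Rightarrow> complex) set" where
  "l2_orth I K = {y \<in> l2 I. \<forall>x\<in>K. l2_inner I x y = 0}"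

definition l2_closed_subspace :: "'i set \<Rightarrow> ('i \<Rightarrow> complex) set \<Rightarrow> bool" where
  "l2_closed_subspace I K \<longleftrightarrow> K \<subseteq> l2 I \<and> (\<lambda>_. 0) \<in> K
     \<and> (\<forall>x\<in>K. \<forall>y\<in>K. (\<lambda>i. x i + y i) \<in> K)
     \<and> (\<forall>c. \<forall>x\<in>K. (\<lambda>i. c * x i) \<in> K)
     \<and> (\<forall>s x. (\<forall>n. s n \<in> K) \<and> x \<in> l2 I \<and>
            (\<lambda>n. l2_norm I (\<lambda>i. s n i - x i)) \<longlonglongrightarrow> 0 \<longrightarrow> x \<in> K)"

definition l2_reducing :: "'i set \<Rightarrow> ('i \<Rightarrow> complex) set \<Rightarrow> (('i \<Rightarrow> complex) \<Rightarrow> ('i \<Rightarrow> complex)) \<Rightarrow> bool" where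
  "l2_reducing I K T \<longleftrightarrow> l2_closed_subspace I K \<and> T ` K \<subseteq> K \<and> T ` l2_orth I K \<subseteq> l2_orth I K"

(* Vector-valued Hardy space H^2_D(E): E-valued functions on the unit disc (set to 0 off the disc)
   of the form sum a_n z^n with sum ||a_n||^2 < infinity. *)

definition H2 :: "'i set \<Rightarrow> (complex \<Rightarrow> 'i \<Rightarrow> complex) set" where
  "H2 I = {F. (\<forall>z. z \<notin> ball 0 1 \<longrightarrow> F z = (\<lambda>_. 0))
     \<and> (\<exists>a. (\<forall>n. a n \<in> l2 I) \<and> summable (\<lambda>n. (l2_norm I (a n))^2)
          \<and> (\<forall>z\<in>ball 0 1. \<forall>i. (\<lambda>n. a n i * z ^ n) sums (F z i)))}"

definition h2_coeff :: "(complex \<Rightarrow> 'i \<Rightarrow> complex) \<Rightarrow> nat \<Rightarrow> 'i \<Rightarrow> complex" where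
  "h2_coeff F n = (\<lambda>i. (deriv ^^ n) (\<lambda>z. F z i) 0 / fact n)"

definition h2_inner :: "'i set \<Rightarrow> (complex \<Rightarrow> 'i \<Rightarrow> complex) \<Rightarrow> (complex \<Rightarrow> 'i \<Rightarrow> complex) \<Rightarrow> complex" where
  "h2_inner I F G = (\<Sum>n. l2_inner I (h2_coeff F n) (h2_coeff G n))"

definition h2_norm :: "'i set \<Rightarrow> (complex \<Rightarrow> 'i \<Rightarrow> complex) \<Rightarrow> real" where
  "h2_norm I F = sqrt (\<Sum>n. (l2_norm I (h2_coeff F n))^2)"

definition h2_orth :: "'i set \<Rightarrow> (complex \<Rightarrow> 'i \<Rightarrow> complex) set \<Rightarrow> (complex \<Rightarrow> 'i \<Rightarrow> complex) set" where
  "h2_orth I M = {G \<in> H2 I. \<forall>F\<in>M. h2_inner I F G = 0}"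

definition h2_closed_subspace :: "'i set \<Rightarrow> (complex \<Rightarrow> 'i \<Rightarrow> complex) set \<Rightarrow> bool" where
  "h2_closed_subspace I M \<longleftrightarrow> M \<subseteq> H2 I \<and> (\<lambda>_ _. 0) \<in> M
     \<and> (\<forall>F\<in>M. \<forall>G\<in>M. (\<lambda>z i. F z i + G z i) \<in> M)
     \<and> (\<forall>c. \<forall>F\<in>M. (\<lambda>z i. c * F z i) \<in> M)
     \<and> (\<forall>s F. (\<forall>n. s n \<in> M) \<and> F \<in> H2 I \<and>
            (\<lambda>n. h2_norm I (\<lambda>z i. s n z i - F z i)) \<longlonglongrightarrow> 0 \<longrightarrow> F \<in> M)"

definition h2_reducing :: "'i set \<Rightarrow> (complex \<Rightarrow> 'i \<Rightarrow> complex) set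
     \<Rightarrow> ((complex \<Rightarrow> 'i \<Rightarrow> complex) \<Rightarrow> (complex \<Rightarrow> 'i \<Rightarrow> complex)) \<Rightarrow> bool" where
  "h2_reducing I M T \<longleftrightarrow> h2_closed_subspace I M \<and> T ` M \<subseteq> M \<and> T ` h2_orth I M \<subseteq> h2_orth I M"

definition mult_op :: "(complex \<Rightarrow> ('i \<Rightarrow> complex) \<Rightarrow> ('i \<Rightarrow> complex))
     \<Rightarrow> (complex \<Rightarrow> 'i \<Rightarrow> complex) \<Rightarrow> (complex \<Rightarrow> 'i \<Rightarrow> complex)" where
  "mult_op \<phi> F = (\<lambda>z. if z \<in> ball 0 1 then \<phi> z (F z) else (\<lambda>_. 0))"

definition phi1 :: "'i set \<Rightarrow> (('i \<Rightarrow> complex) \<Rightarrow> ('i \<Rightarrow> complex)) \<Rightarrow> (('i \<Rightarrow> complex) \<Rightarrow> ('i \<Rightarrow> complex))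
     \<Rightarrow> complex \<Rightarrow> ('i \<Rightarrow> complex) \<Rightarrow> ('i \<Rightarrow> complex)" where
  "phi1 I P U z x = l2_adj I U (\<lambda>i. (x i - P x i) + z * P x i)"

definition phi2 :: "'i set \<Rightarrow> (('i \<Rightarrow> complex) \<Rightarrow> ('i \<Rightarrow> complex)) \<Rightarrow> (('i \<Rightarrow> complex) \<Rightarrow> ('i \<Rightarrow> complex))
     \<Rightarrow> complex \<Rightarrow> ('i \<Rightarrow> complex) \<Rightarrow> ('i \<Rightarrow> complex)" where
  "phi2 I P U z x = (\<lambda>i. P (U x) i + z * (U x i - P (U x) i))"

end

theory Submission
  imports Defs
begin

(* Both multipliers act on Taylor coefficients: if F = sum a_n z^n, then M_phi1 F has coefficients
   U^*(a_n - P a_n) + U^* P a_(n-1) and M_phi2 F has coefficients P U a_n + (U - P U) a_(n-1).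
   Moreover M_phi2 M_phi1 is the shift F \<mapsto> z F, so a joint reducing subspace M reduces the
   shift; such an M is H2(K), the functions all of whose coefficients lie in the closed subspace
   K = {x. the constant function x lies in M}, and its orthogonal complement is H2(K^perp).
   Evaluating M_phi1 and M_phi2 on constants shows that H2(K) is invariant under both
   multipliers iff K is invariant under P, U and U^*, which for closed K means that K reduces
   P and U. Conversely every such K yields the joint reducing subspace H2(K), and H2(K) is
   trivial iff K is. *)

section \<open>The sequence space l2\<close>

lemma l2_memI:
  "(\<And>i. i \<notin> J \<Longrightarrow> x i = 0) \<Longrightarrow> (\<lambda>i. (cmod (x i))^2) summable_on J \<Longrightarrow> x \<in> l2 J"
  by (simp add: l2_def)

lemma l2_zero_outside: "x \<in> l2 J \<Longrightarrow> i \<notin> J \<Longrightarrow> x i = 0"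
  by (simp add: l2_def)

lemma l2_summable_sq: "x \<in> l2 J \<Longrightarrow> (\<lambda>i. (cmod (x i))^2) summable_on J"
  by (simp add: l2_def)

lemma sq_add_le: "(u + v)^2 \<le> 2 * u^2 + 2 * v^2" for u v :: real
proof -
  have "0 \<le> (u - v)^2" by simp
  thus ?thesis by (simp add: power2_diff power2_sum)
qed

lemma l2_zero [simp]: "(\<lambda>_. 0) \<in> l2 J"
  by (rule l2_memI) auto

lemma l2_add: assumes "x \<in> l2 J" "y \<in> l2 J" shows "(\<lambda>i. x i + y i) \<in> l2 J"
proof (rule l2_memI)
  have bound: "(cmod (x i + y i))^2 \<le> 2 * (cmod (x i))^2 + 2 * (cmod (y i))^2" for i
  proof -
    have "(cmod (x i + y i))^2 \<le> (cmod (x i) + cmod (y i))^2"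
      by (simp add: power_mono norm_triangle_ineq)
    also have "\<dots> \<le> 2 * (cmod (x i))^2 + 2 * (cmod (y i))^2"
      by (rule sq_add_le)
    finally show ?thesis .
  qed
  show "(\<lambda>i. (cmod (x i + y i))^2) summable_on J"
  proof (rule summable_on_comparison_test)
    show "(\<lambda>i. 2 * (cmod (x i))^2 + 2 * (cmod (y i))^2) summable_on J"
      using assms by (intro summable_on_add summable_on_cmult_right l2_summable_sq)
  qed (auto intro: bound)
qed (use assms in \<open>auto simp: l2_zero_outside\<close>)

lemma l2_scale: assumes "x \<in> l2 J" shows "(\<lambda>i. c * x i) \<in> l2 J"
proof (rule l2_memI)
  have "(\<lambda>i. (cmod c)^2 * (cmod (x i))^2) summable_on J"
    using assms by (intro summable_on_cmult_right l2_summable_sq)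
  thus "(\<lambda>i. (cmod (c * x i))^2) summable_on J"
    by (simp add: norm_mult power_mult_distrib)
qed (use assms in \<open>auto simp: l2_zero_outside\<close>)

lemma l2_uminus: "x \<in> l2 J \<Longrightarrow> (\<lambda>i. - x i) \<in> l2 J"
  using l2_scale[of x J "-1"] by simp

lemma l2_diff: assumes "x \<in> l2 J" "y \<in> l2 J" shows "(\<lambda>i. x i - y i) \<in> l2 J"
  using l2_add[OF assms(1) l2_uminus[OF assms(2)]] by simp

lemma l2_inner_summable: assumes "x \<in> l2 J" "y \<in> l2 J"
  shows "(\<lambda>i. x i * cnj (y i)) summable_on J"
proof -
  have "(\<lambda>i. norm (x i * cnj (y i))) summable_on J"
  proof (rule Infinite_Sum.abs_summable_on_comparison_test'[where f="\<lambda>i. x i * cnj (y i)" and g="\<lambda>i. (cmod (x i))^2 + (cmod (y i))^2"])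
    show "(\<lambda>i. (cmod (x i))^2 + (cmod (y i))^2) summable_on J"
      using assms by (intro summable_on_add l2_summable_sq)
    have "2 * (cmod (x i) * cmod (y i)) \<le> (cmod (x i))^2 + (cmod (y i))^2" for i
    proof -
      have "0 \<le> (cmod (x i) - cmod (y i))^2" by simp
      thus ?thesis by (simp add: power2_diff)
    qed
    thus "norm (x i * cnj (y i)) \<le> (cmod (x i))^2 + (cmod (y i))^2" for i
      by (simp add: norm_mult) (smt (verit) mult_nonneg_nonneg norm_ge_zero)
  qed
  thus ?thesis by (simp add: summable_on_iff_abs_summable_on_complex)
qed

lemma l2_inner_add_left: assumes "x \<in> l2 J" "y \<in> l2 J" "z \<in> l2 J"
  shows "l2_inner J (\<lambda>i. x i + y i) z = l2_inner J x z + l2_inner J y z"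
  unfolding l2_inner_def distrib_right
  by (intro infsum_add l2_inner_summable assms)

lemma l2_inner_add_right: assumes "x \<in> l2 J" "y \<in> l2 J" "z \<in> l2 J"
  shows "l2_inner J z (\<lambda>i. x i + y i) = l2_inner J z x + l2_inner J z y"
  unfolding l2_inner_def complex_cnj_add distrib_left
  by (intro infsum_add l2_inner_summable assms)

lemma l2_inner_scale_left: assumes "x \<in> l2 J" "y \<in> l2 J"
  shows "l2_inner J (\<lambda>i. c * x i) y = c * l2_inner J x y"
  unfolding l2_inner_def mult.assoc by (intro infsum_cmult_right l2_inner_summable assms)

lemma l2_inner_scale_right: assumes "x \<in> l2 J" "y \<in> l2 J"
  shows "l2_inner J x (\<lambda>i. c * y i) = cnj c * l2_inner J x y"
proof -
  have "(\<lambda>i. x i * cnj (c * y i)) = (\<lambda>i. cnj c * (x i * cnj (y i)))" by (simp add: fun_eq_iff)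
  thus ?thesis by (simp add: l2_inner_def infsum_cmult_right[OF l2_inner_summable[OF assms]])
qed

lemma l2_inner_cnj: "cnj (l2_inner J x y) = l2_inner J y x"
  unfolding l2_inner_def by (subst infsum_cnj[symmetric]) (simp add: mult.commute)

lemma l2_inner_eq_0_commute: "l2_inner J x y = 0 \<longleftrightarrow> l2_inner J y x = 0"
  by (metis l2_inner_cnj complex_cnj_zero_iff)

lemma l2_inner_diff_right: assumes "x \<in> l2 J" "y \<in> l2 J" "z \<in> l2 J"
  shows "l2_inner J z (\<lambda>i. x i - y i) = l2_inner J z x - l2_inner J z y"
  using l2_inner_add_right[OF assms(1) l2_scale[OF assms(2), of "-1"] assms(3)]
    l2_inner_scale_right[OF assms(3,2), of "-1"] by simp

lemma l2_inner_zero_left [simp]: "l2_inner J (\<lambda>_. 0) y = 0"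
  and l2_inner_zero_right [simp]: "l2_inner J x (\<lambda>_. 0) = 0"
  by (simp_all add: l2_inner_def)

lemma l2_norm_nonneg: "0 \<le> l2_norm J x"
  by (simp add: l2_norm_def infsum_nonneg)

lemma l2_norm_sq: "(l2_norm J x)^2 = infsum (\<lambda>i. (cmod (x i))^2) J"
  by (simp add: l2_norm_def infsum_nonneg)

lemma l2_norm_scale: "l2_norm J (\<lambda>i. c * x i) = cmod c * l2_norm J x"
  by (simp add: l2_norm_def norm_mult power_mult_distrib infsum_cmult_right' real_sqrt_mult)

lemma l2_inner_self: assumes "x \<in> l2 J"
  shows "l2_inner J x x = complex_of_real ((l2_norm J x)^2)"
proof -
  have "((\<lambda>i. complex_of_real ((cmod (x i))^2)) has_sum
      complex_of_real (infsum (\<lambda>i. (cmod (x i))^2) J)) J"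
    using assms by (intro has_sum_of_real has_sum_infsum l2_summable_sq)
  moreover have "(\<lambda>i. complex_of_real ((cmod (x i))^2)) = (\<lambda>i. x i * cnj (x i))"
    by (auto simp: complex_norm_square[symmetric])
  ultimately have "((\<lambda>i. x i * cnj (x i)) has_sum complex_of_real ((l2_norm J x)^2)) J"
    by (simp only: l2_norm_sq)
  thus ?thesis unfolding l2_inner_def by (rule infsumI)
qed

lemma l2_norm_eq_0D: assumes "x \<in> l2 J" "l2_norm J x = 0" shows "x = (\<lambda>_. 0)"
proof
  fix i
  show "x i = 0"
  proof (cases "i \<in> J")
    case True
    have "infsum (\<lambda>i. (cmod (x i))^2) J = 0" using assms(2) l2_norm_sq[of J x] by simp
    hence "(cmod (x i))^2 = 0"
      using assms True by (intro nonneg_infsum_le_0D[where A=J]) (auto intro: l2_summable_sq)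
    thus ?thesis by simp
  qed (use assms in \<open>auto simp: l2_zero_outside\<close>)
qed

lemma l2_inner_self_eq_0D: "x \<in> l2 J \<Longrightarrow> l2_inner J x x = 0 \<Longrightarrow> x = (\<lambda>_. 0)"
  using l2_inner_self l2_norm_eq_0D by force

lemma l2_coord_le_norm: assumes "x \<in> l2 J" shows "cmod (x i) \<le> l2_norm J x"
proof (cases "i \<in> J")
  case True
  have "infsum (\<lambda>i. (cmod (x i))^2) {i} \<le> infsum (\<lambda>i. (cmod (x i))^2) J"
    using True assms by (intro infsum_mono_neutral) (auto intro: l2_summable_sq)
  hence "(cmod (x i))^2 \<le> (l2_norm J x)^2" by (simp add: l2_norm_sq)
  thus ?thesis using l2_norm_nonneg by (rule power2_le_imp_le)
qed (use assms l2_norm_nonneg in \<open>auto simp: l2_zero_outside\<close>)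

lemma l2_sum_sq_le_norm: assumes "x \<in> l2 J" "finite F" "F \<subseteq> J"
  shows "(\<Sum>i\<in>F. (cmod (x i))^2) \<le> (l2_norm J x)^2"
proof -
  have "infsum (\<lambda>i. (cmod (x i))^2) F \<le> infsum (\<lambda>i. (cmod (x i))^2) J"
    using assms by (intro infsum_mono_neutral) (auto intro: l2_summable_sq)
  thus ?thesis using assms(2) by (simp add: l2_norm_sq)
qed

lemma l2_imp_l2_UNIV: assumes "x \<in> l2 J" shows "x \<in> l2 UNIV"
proof (rule l2_memI)
  show "(\<lambda>i. (cmod (x i))^2) summable_on UNIV"
    using l2_summable_sq[OF assms]
    by (subst summable_on_cong_neutral[where T=J]) (auto simp: l2_zero_outside[OF assms])
qed simp

lemma l2_UNIV_imp_l2: "x \<in> l2 UNIV \<Longrightarrow> (\<And>i. i \<notin> J \<Longrightarrow> x i = 0) \<Longrightarrow> x \<in> l2 J"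
  by (rule l2_memI) (auto intro: summable_on_subset[OF l2_summable_sq subset_UNIV])

lemma l2_inner_UNIV: "x \<in> l2 J \<Longrightarrow> l2_inner J x y = l2_inner UNIV x y"
  unfolding l2_inner_def by (rule infsum_cong_neutral) (auto simp: l2_zero_outside)

lemma l2_norm_UNIV: "x \<in> l2 J \<Longrightarrow> l2_norm J x = l2_norm UNIV x"
  unfolding l2_norm_def by (subst infsum_cong_neutral[where T=J]) (auto simp: l2_zero_outside)

section \<open>l2 as a real Hilbert space\<close>

(* The real part of l2_inner makes l2 UNIV a real inner product space; this is all we need to
   borrow the Cauchy-Schwarz inequality, completeness and the projection theorem. *)
typedef 'a ell2 = "l2 (UNIV::'a set)"
  by (rule exI[of _ "\<lambda>_. 0"]) simp

lemma Rep_ell2_l2 [simp]: "Rep_ell2 a \<in> l2 UNIV"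
  by (rule Rep_ell2)

lemma Rep_ell2_Abs_ell2 [simp]: "x \<in> l2 UNIV \<Longrightarrow> Rep_ell2 (Abs_ell2 x) = x"
  by (simp add: Abs_ell2_inverse)

lemma Rep_ell2_Abs_ell2_l2: "x \<in> l2 J \<Longrightarrow> Rep_ell2 (Abs_ell2 x) = x"
  by (simp add: l2_imp_l2_UNIV)

lemma ell2_eqI: "(\<And>i. Rep_ell2 a i = Rep_ell2 b i) \<Longrightarrow> a = b"
  by (metis Rep_ell2_inject ext)

instantiation ell2 :: (type) real_inner
begin

definition "0 = Abs_ell2 (\<lambda>_. 0)"
definition "a + b = Abs_ell2 (\<lambda>i. Rep_ell2 a i + Rep_ell2 b i)"
definition "a - b = Abs_ell2 (\<lambda>i. Rep_ell2 a i - Rep_ell2 b i)"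
definition "- a = Abs_ell2 (\<lambda>i. - Rep_ell2 a i)"
definition "scaleR r a = Abs_ell2 (\<lambda>i. complex_of_real r * Rep_ell2 a i)"
definition "norm a = l2_norm UNIV (Rep_ell2 a)"
definition "sgn (a :: 'a ell2) = scaleR (inverse (norm a)) a"
definition "dist (a :: 'a ell2) b = norm (a - b)"
definition "(uniformity :: ('a ell2 \<times> 'a ell2) filter) =
  (INF e\<in>{0<..}. principal {(x, y). dist x y < e})"
definition "open (U :: 'a ell2 set) = (\<forall>x\<in>U. \<forall>\<^sub>F (x', y) in uniformity. x' = x \<longrightarrow> y \<in> U)"
definition "inner a b = Re (l2_inner UNIV (Rep_ell2 a) (Rep_ell2 b))"

lemma Rep_ell2_zero [simp]: "Rep_ell2 (0::'a ell2) = (\<lambda>_. 0)"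
  and Rep_ell2_add [simp]: "Rep_ell2 (a + b) = (\<lambda>i. Rep_ell2 a i + Rep_ell2 b i)"
  and Rep_ell2_diff [simp]: "Rep_ell2 (a - b) = (\<lambda>i. Rep_ell2 a i - Rep_ell2 b i)"
  and Rep_ell2_uminus [simp]: "Rep_ell2 (- a) = (\<lambda>i. - Rep_ell2 a i)"
  and Rep_ell2_scaleR [simp]: "Rep_ell2 (scaleR r a) = (\<lambda>i. complex_of_real r * Rep_ell2 a i)"
  by (simp_all add: zero_ell2_def plus_ell2_def minus_ell2_def uminus_ell2_def scaleR_ell2_def
      l2_add l2_diff l2_uminus l2_scale)

instance
proof
  fix a b c :: "'a ell2" and r s :: real and U :: "'a ell2 set"
  show "a + b + c = a + (b + c)" by (rule ell2_eqI) simp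
  show "a + b = b + a" by (rule ell2_eqI) simp
  show "0 + a = a" by (rule ell2_eqI) simp
  show "- a + a = 0" by (rule ell2_eqI) simp
  show "a - b = a + - b" by (rule ell2_eqI) simp
  show "r *\<^sub>R (a + b) = r *\<^sub>R a + r *\<^sub>R b" by (rule ell2_eqI) (simp add: algebra_simps)
  show "(r + s) *\<^sub>R a = r *\<^sub>R a + s *\<^sub>R a" by (rule ell2_eqI) (simp add: algebra_simps)
  show "r *\<^sub>R s *\<^sub>R a = (r * s) *\<^sub>R a" by (rule ell2_eqI) simp
  show "1 *\<^sub>R a = a" by (rule ell2_eqI) simp
  show "sgn a = inverse (norm a) *\<^sub>R a" by (simp add: sgn_ell2_def)
  show "dist a b = norm (a - b)" by (simp add: dist_ell2_def)
  show "(uniformity :: ('a ell2 \<times> 'a ell2) filter) = (INF e\<in>{0<..}. principal {(x, y). dist x y < e})"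
    by (simp add: uniformity_ell2_def)
  show "open U = (\<forall>x\<in>U. \<forall>\<^sub>F (x', y) in uniformity. x' = x \<longrightarrow> y \<in> U)"
    by (simp add: open_ell2_def)
  show "inner a b = inner b a"
    unfolding inner_ell2_def by (subst l2_inner_cnj[symmetric]) simp
  show "inner (a + b) c = inner a c + inner b c"
    unfolding inner_ell2_def by (simp add: l2_inner_add_left)
  show "inner (r *\<^sub>R a) b = r * inner a b"
    unfolding inner_ell2_def by (simp add: l2_inner_scale_left)
  show "0 \<le> inner a a"
    unfolding inner_ell2_def by (simp add: l2_inner_self)
  show "(inner a a = 0) = (a = 0)"
  proof
    assume "inner a a = 0"
    hence "l2_norm UNIV (Rep_ell2 a) = 0" unfolding inner_ell2_def by (simp add: l2_inner_self)
    hence "Rep_ell2 a = (\<lambda>_. 0)" by (intro l2_norm_eq_0D) auto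
    thus "a = 0" by (intro ell2_eqI) simp
  qed (simp add: inner_ell2_def)
  show "norm a = sqrt (inner a a)"
    unfolding inner_ell2_def norm_ell2_def by (simp add: l2_inner_self l2_norm_nonneg)
qed

end

lemma norm_Abs_ell2: "x \<in> l2 J \<Longrightarrow> norm (Abs_ell2 x) = l2_norm J x"
  by (simp add: norm_ell2_def l2_norm_UNIV Rep_ell2_Abs_ell2_l2)

lemma inner_Abs_ell2: "x \<in> l2 J \<Longrightarrow> y \<in> l2 J \<Longrightarrow> inner (Abs_ell2 x) (Abs_ell2 y) = Re (l2_inner J x y)"
  by (simp add: inner_ell2_def l2_inner_UNIV Rep_ell2_Abs_ell2_l2)

lemma Abs_ell2_add: assumes "x \<in> l2 J" "y \<in> l2 J"
  shows "Abs_ell2 (\<lambda>i. x i + y i) = Abs_ell2 x + Abs_ell2 y"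
  using Rep_ell2_Abs_ell2_l2[OF l2_add[OF assms]] Rep_ell2_Abs_ell2_l2[OF assms(1)]
    Rep_ell2_Abs_ell2_l2[OF assms(2)] by (intro ell2_eqI) simp

lemma Abs_ell2_diff: assumes "x \<in> l2 J" "y \<in> l2 J"
  shows "Abs_ell2 (\<lambda>i. x i - y i) = Abs_ell2 x - Abs_ell2 y"
  using Rep_ell2_Abs_ell2_l2[OF l2_diff[OF assms]] Rep_ell2_Abs_ell2_l2[OF assms(1)]
    Rep_ell2_Abs_ell2_l2[OF assms(2)] by (intro ell2_eqI) simp

lemma norm_Rep_ell2_le: "cmod (Rep_ell2 a i) \<le> norm a"
  unfolding norm_ell2_def by (rule l2_coord_le_norm) simp

lemma bounded_linear_Rep_ell2_apply: "bounded_linear (\<lambda>a::'a ell2. Rep_ell2 a i)"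
proof (rule bounded_linear_intro[where K=1])
  fix a b :: "'a ell2" and r :: real
  show "Rep_ell2 (a + b) i = Rep_ell2 a i + Rep_ell2 b i" by simp
  show "Rep_ell2 (r *\<^sub>R a) i = r *\<^sub>R Rep_ell2 a i" by (simp add: scaleR_conv_of_real)
  show "norm (Rep_ell2 a i) \<le> norm a * 1" using norm_Rep_ell2_le by simp
qed

lemma ell2_Cauchy_finite_sums_le:
  fixes X :: "nat \<Rightarrow> 'a ell2"
  assumes C: "Cauchy X" and x: "\<And>i. (\<lambda>n. Rep_ell2 (X n) i) \<longlonglongrightarrow> x i" and e: "0 < e"
  shows "\<exists>N. \<forall>n\<ge>N. \<forall>F. finite F \<longrightarrow> (\<Sum>i\<in>F. (cmod (Rep_ell2 (X n) i - x i))^2) \<le> e^2"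
proof -
  from CauchyD[OF C e] obtain M where M: "\<forall>m\<ge>M. \<forall>n\<ge>M. norm (X m - X n) < e" by blast
  have "(\<Sum>i\<in>F. (cmod (Rep_ell2 (X n) i - x i))^2) \<le> e^2" if n: "n \<ge> M" and F: "finite F" for n F
  proof (rule LIMSEQ_le_const2)
    show "(\<lambda>m. \<Sum>i\<in>F. (cmod (Rep_ell2 (X n) i - Rep_ell2 (X m) i))^2) \<longlonglongrightarrow>
        (\<Sum>i\<in>F. (cmod (Rep_ell2 (X n) i - x i))^2)"
      by (intro tendsto_intros x)
    have "(\<Sum>i\<in>F. (cmod (Rep_ell2 (X n) i - Rep_ell2 (X m) i))^2) \<le> e^2" if m: "m \<ge> M" for m
    proof -
      have "(\<Sum>i\<in>F. (cmod (Rep_ell2 (X n) i - Rep_ell2 (X m) i))^2) \<le> (norm (X n - X m))^2"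
        using l2_sum_sq_le_norm[OF Rep_ell2_l2[of "X n - X m"] F] by (simp add: norm_ell2_def)
      also have "\<dots> \<le> e^2" using M n m by (intro power_mono) (auto intro: less_imp_le)
      finally show ?thesis .
    qed
    thus "\<exists>N. \<forall>m\<ge>N. (\<Sum>i\<in>F. (cmod (Rep_ell2 (X n) i - Rep_ell2 (X m) i))^2) \<le> e^2"
      by blast
  qed
  thus ?thesis by blast
qed

lemma l2_UNIV_if_finite_sums_le:
  assumes sums: "\<forall>F. finite F \<longrightarrow> (\<Sum>i\<in>F. (cmod (y i))^2) \<le> c^2" and c: "0 \<le> c"
  shows "y \<in> l2 UNIV" "l2_norm UNIV y \<le> c"
proof -
  show y: "y \<in> l2 UNIV"
  proof (rule l2_memI)
    show "(\<lambda>i. (cmod (y i))^2) summable_on UNIV"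
      by (rule nonneg_bdd_above_summable_on) (use sums in \<open>auto intro!: bdd_aboveI[where M="c^2"]\<close>)
  qed simp
  have "(l2_norm UNIV y)^2 \<le> c^2"
    unfolding l2_norm_sq by (rule infsum_le_finite_sums) (use l2_summable_sq[OF y] sums in auto)
  thus "l2_norm UNIV y \<le> c" using c by (rule power2_le_imp_le)
qed

instance ell2 :: (type) complete_space
proof
  fix X :: "nat \<Rightarrow> 'a ell2"
  assume C: "Cauchy X"
  define x where "x i = lim (\<lambda>n. Rep_ell2 (X n) i)" for i
  have x: "(\<lambda>n. Rep_ell2 (X n) i) \<longlonglongrightarrow> x i" for i
    using bounded_linear.Cauchy[OF bounded_linear_Rep_ell2_apply C, of i]
    by (simp add: x_def Cauchy_convergent_iff convergent_LIMSEQ_iff)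
  note close = ell2_Cauchy_finite_sums_le[OF C x]
  obtain N where "\<forall>F. finite F \<longrightarrow> (\<Sum>i\<in>F. (cmod (Rep_ell2 (X N) i - x i))^2) \<le> 1^2"
    using close[of 1] by auto
  hence x_l2: "x \<in> l2 UNIV"
    using l2_diff[OF Rep_ell2_l2[of "X N"] l2_UNIV_if_finite_sums_le(1)[of "\<lambda>i. Rep_ell2 (X N) i - x i" 1]]
    by simp
  have "X \<longlonglongrightarrow> Abs_ell2 x"
  proof (rule LIMSEQ_I)
    fix r :: real assume r: "0 < r"
    from close[of "r/2"] r obtain N' where N': "\<forall>n\<ge>N'. \<forall>F. finite F \<longrightarrow>
        (\<Sum>i\<in>F. (cmod (Rep_ell2 (X n) i - x i))^2) \<le> (r/2)^2"
      by auto
    have "norm (X n - Abs_ell2 x) \<le> r/2" if n: "n \<ge> N'" for n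
      using l2_UNIV_if_finite_sums_le(2)[of "\<lambda>i. Rep_ell2 (X n) i - x i" "r/2"] N' n r x_l2
      by (simp add: norm_ell2_def)
    thus "\<exists>N. \<forall>n\<ge>N. norm (X n - Abs_ell2 x) < r" using r by force
  qed
  thus "convergent X" by (rule convergentI)
qed

instance ell2 :: (type) banach ..

lemma l2_triangle: assumes "x \<in> l2 J" "y \<in> l2 J"
  shows "l2_norm J (\<lambda>i. x i + y i) \<le> l2_norm J x + l2_norm J y"
  using norm_triangle_ineq[of "Abs_ell2 x" "Abs_ell2 y"] assms
  by (simp add: norm_Abs_ell2[OF l2_add[OF assms], symmetric] Abs_ell2_add norm_Abs_ell2)

lemma l2_cauchy_schwarz: assumes x: "x \<in> l2 J" and y: "y \<in> l2 J"
  shows "cmod (l2_inner J x y) \<le> l2_norm J x * l2_norm J y"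
proof (cases "l2_inner J x y = 0")
  case True thus ?thesis by (simp add: l2_norm_nonneg)
next
  case False
  define c where "c = l2_inner J x y"
  define u where "u = cnj c / cmod c"
  have ux: "(\<lambda>i. u * x i) \<in> l2 J" using x by (rule l2_scale)
  have "u * c = complex_of_real (cmod c)"
    using False by (simp add: u_def c_def field_simps complex_norm_square[symmetric] power2_eq_square)
  hence "cmod c = Re (u * c)" by simp
  also have "\<dots> = inner (Abs_ell2 (\<lambda>i. u * x i)) (Abs_ell2 y)"
    using x y ux by (simp add: inner_Abs_ell2 l2_inner_scale_left c_def)
  also have "\<dots> \<le> norm (Abs_ell2 (\<lambda>i. u * x i)) * norm (Abs_ell2 y)"
    by (rule norm_cauchy_schwarz)
  also have "\<dots> = l2_norm J x * l2_norm J y"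
  proof -
    have "cmod u = 1" using False by (simp add: u_def c_def norm_divide)
    thus ?thesis using norm_Abs_ell2[OF ux] norm_Abs_ell2[OF y] l2_norm_scale[of J u x] by simp
  qed
  finally show ?thesis by (simp add: c_def)
qed

section \<open>Orthogonal complements\<close>

lemma parallelogram_law: fixes a b :: "'a::real_inner"
  shows "(norm (a - b))^2 + (norm (a + b))^2 = 2 * (norm a)^2 + 2 * (norm b)^2"
  by (simp add: power2_norm_eq_inner inner_add inner_diff inner_commute algebra_simps)

(* The parallelogram law applied to x - v m and x - v n bounds norm (v m - v n) by the excess of
   the two distances over d, since the midpoint of v m and v n lies in V. *)
lemma minimizing_sequence_Cauchy:
  fixes V :: "'a::real_inner set"
  assumes V: "subspace V" and v: "\<And>n. v n \<in> V" and d_le: "\<And>u. u \<in> V \<Longrightarrow> d \<le> (norm (x - u))^2"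
    and v_close: "\<And>n. (norm (x - v n))^2 < d + inverse (real (Suc n))"
  shows "Cauchy v"
proof (rule CauchyI)
  fix e :: real assume e: "0 < e"
  obtain M where M: "inverse (real (Suc M)) < e^2 / 4"
    using reals_Archimedean[of "e^2/4"] e by auto
  have "norm (v m - v n) < e" if m: "m \<ge> M" and n: "n \<ge> M" for m n
  proof -
    have "(1/2) *\<^sub>R (v m + v n) \<in> V" using V v by (intro subspace_scale subspace_add) auto
    hence mid: "d \<le> (norm (x - (1/2) *\<^sub>R (v m + v n)))^2" by (rule d_le)
    have "(x - v n) + (x - v m) = 2 *\<^sub>R (x - (1/2) *\<^sub>R (v m + v n))"
      by (simp add: algebra_simps scaleR_2)
    hence sum: "(norm ((x - v n) + (x - v m)))^2 = 4 * (norm (x - (1/2) *\<^sub>R (v m + v n)))^2"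
      by (simp add: power2_eq_square)
    have par: "(norm (v m - v n))^2 + (norm ((x - v n) + (x - v m)))^2
        = 2 * (norm (x - v n))^2 + 2 * (norm (x - v m))^2"
      using parallelogram_law[of "x - v n" "x - v m"] by simp
    have "inverse (real (Suc m)) \<le> inverse (real (Suc M))"
      "inverse (real (Suc n)) \<le> inverse (real (Suc M))"
      using m n by (simp_all add: le_imp_inverse_le)
    hence "(norm (v m - v n))^2 < e^2"
      using par sum mid v_close[of m] v_close[of n] M by linarith
    thus ?thesis using e by (simp add: power_less_imp_less_base)
  qed
  thus "\<exists>M. \<forall>m\<ge>M. \<forall>n\<ge>M. norm (v m - v n) < e" by blast
qed

lemma closed_subspace_nearest_point_exists:
  fixes V :: "'a::{real_inner,complete_space} set"
  assumes "closed V" "subspace V"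
  shows "\<exists>p\<in>V. \<forall>v\<in>V. (norm (x - p))^2 \<le> (norm (x - v))^2"
proof -
  define d where "d = (INF v\<in>V. (norm (x - v))^2)"
  have V0: "0 \<in> V" using assms(2) by (rule subspace_0)
  have bdd: "bdd_below ((\<lambda>v. (norm (x - v))^2) ` V)" by (auto intro!: bdd_belowI[where m=0])
  have d_le: "d \<le> (norm (x - v))^2" if "v \<in> V" for v
    unfolding d_def using bdd that by (rule cINF_lower)
  have "\<exists>v\<in>V. (norm (x - v))^2 < d + inverse (real (Suc n))" for n
    using cINF_less_iff[OF _ bdd, of "d + inverse (real (Suc n))"] V0 by (auto simp: d_def)
  then obtain v where v: "\<And>n. v n \<in> V" "\<And>n. (norm (x - v n))^2 < d + inverse (real (Suc n))"
    by metis
  obtain p where p: "v \<longlonglongrightarrow> p"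
    using minimizing_sequence_Cauchy[OF assms(2) v(1) d_le v(2)] Cauchy_convergent_iff convergent_def
    by blast
  have "p \<in> V" using closed_sequentially[OF assms(1)] v(1) p by blast
  moreover have "(norm (x - p))^2 \<le> d"
  proof (rule LIMSEQ_le[where X="\<lambda>n. (norm (x - v n))^2" and Y="\<lambda>n. d + inverse (real (Suc n))"])
    show "(\<lambda>n. (norm (x - v n))^2) \<longlonglongrightarrow> (norm (x - p))^2" by (intro tendsto_intros p)
    show "(\<lambda>n. d + inverse (real (Suc n))) \<longlonglongrightarrow> d"
      using tendsto_add[OF tendsto_const LIMSEQ_inverse_real_of_nat, of d] by simp
  qed (use v(2) less_imp_le in blast)
  ultimately show ?thesis using d_le order_trans by blast
qed

(* First-order condition: t \<mapsto> norm (w - t u)^2 attains its minimum at t = 0. *)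
lemma nearest_point_orthogonal:
  fixes V :: "'a::real_inner set"
  assumes "subspace V" "p \<in> V" "\<forall>v\<in>V. (norm (x - p))^2 \<le> (norm (x - v))^2" "u \<in> V"
  shows "inner (x - p) u = 0"
proof -
  define w c s where "w = x - p" and "c = inner w u" and "s = (norm u)^2"
  define t where "t = c / (s + 1)"
  have s0: "0 \<le> s" by (simp add: s_def)
  have "p + t *\<^sub>R u \<in> V" using assms by (intro subspace_add subspace_scale) auto
  moreover have "x - (p + t *\<^sub>R u) = w - t *\<^sub>R u" by (simp add: w_def algebra_simps)
  ultimately have "(norm w)^2 \<le> (norm (w - t *\<^sub>R u))^2"
    using assms(3) unfolding w_def by metis
  also have "(norm (w - t *\<^sub>R u))^2 = (norm w)^2 - 2 * t * c + t^2 * s"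
    unfolding s_def c_def power2_norm_eq_inner
    by (simp add: inner_diff_left inner_diff_right inner_commute[of u w] algebra_simps power2_eq_square)
  finally have "0 \<le> t * (t * s - 2 * c)" by (simp add: algebra_simps power2_eq_square)
  also have "t * (t * s - 2 * c) = - (c^2 * (s + 2)) / (s + 1)^2"
    using s0 by (simp add: t_def field_simps power2_eq_square)
  finally have "c^2 * (s + 2) / (s + 1)^2 \<le> 0" by simp
  moreover have "0 < (s + 1)^2" using s0 by simp
  ultimately have "c^2 * (s + 2) \<le> 0" by (simp add: divide_le_0_iff)
  hence "c^2 \<le> 0" using s0 by (simp add: mult_le_0_iff)
  thus ?thesis by (simp add: c_def w_def)
qed

lemma orthogonal_projection_exists:
  fixes V :: "'a::{real_inner,complete_space} set"
  assumes "closed V" "subspace V"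
  shows "\<exists>p\<in>V. \<forall>v\<in>V. inner (x - p) v = 0"
  using closed_subspace_nearest_point_exists[OF assms] nearest_point_orthogonal[OF assms(2)] by blast

lemma l2_closed_subspace_subset: "l2_closed_subspace J K \<Longrightarrow> K \<subseteq> l2 J"
  and l2_closed_subspace_zero: "l2_closed_subspace J K \<Longrightarrow> (\<lambda>_. 0) \<in> K"
  and l2_closed_subspace_add: "l2_closed_subspace J K \<Longrightarrow> x \<in> K \<Longrightarrow> y \<in> K \<Longrightarrow> (\<lambda>i. x i + y i) \<in> K"
  and l2_closed_subspace_scale: "l2_closed_subspace J K \<Longrightarrow> x \<in> K \<Longrightarrow> (\<lambda>i. c * x i) \<in> K"
  and l2_closed_subspace_limit: "l2_closed_subspace J K \<Longrightarrow> (\<And>n. s n \<in> K) \<Longrightarrow> x \<in> l2 J \<Longrightarrow>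
    (\<lambda>n. l2_norm J (\<lambda>i. s n i - x i)) \<longlonglongrightarrow> 0 \<Longrightarrow> x \<in> K"
  unfolding l2_closed_subspace_def by blast+

lemma l2_closed_subspace_diff: assumes "l2_closed_subspace J K" "x \<in> K" "y \<in> K"
  shows "(\<lambda>i. x i - y i) \<in> K"
  using l2_closed_subspace_add[OF assms(1,2) l2_closed_subspace_scale[OF assms(1,3), of "-1"]] by simp

lemma l2_orth_subset: "l2_orth J K \<subseteq> l2 J"
  by (auto simp: l2_orth_def)

lemma l2_closed_subspace_orth: assumes L: "L \<subseteq> l2 J" shows "l2_closed_subspace J (l2_orth J L)"
  unfolding l2_closed_subspace_def
proof (intro conjI allI ballI impI)
  show "l2_orth J L \<subseteq> l2 J" by (rule l2_orth_subset)
  show "(\<lambda>_. 0) \<in> l2_orth J L" by (simp add: l2_orth_def)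
  fix a b assume "a \<in> l2_orth J L" "b \<in> l2_orth J L"
  thus "(\<lambda>i. a i + b i) \<in> l2_orth J L"
    using L by (auto simp: l2_orth_def l2_add l2_inner_add_right subset_iff)
next
  fix c a assume "a \<in> l2_orth J L"
  thus "(\<lambda>i. c * a i) \<in> l2_orth J L"
    using L by (auto simp: l2_orth_def l2_scale l2_inner_scale_right subset_iff)
next
  fix s x assume "(\<forall>n. s n \<in> l2_orth J L) \<and> x \<in> l2 J \<and> (\<lambda>n. l2_norm J (\<lambda>i. s n i - x i)) \<longlonglongrightarrow> 0"
  hence s: "\<And>n. s n \<in> l2_orth J L" and x: "x \<in> l2 J"
    and lim: "(\<lambda>n. l2_norm J (\<lambda>i. s n i - x i)) \<longlonglongrightarrow> 0"
    by auto
  have s_l2: "s n \<in> l2 J" for n using s l2_orth_subset by blast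
  have "l2_inner J k x = 0" if k: "k \<in> L" for k
  proof -
    have k_l2: "k \<in> l2 J" using k L by blast
    have "cmod (l2_inner J k x) \<le> l2_norm J k * l2_norm J (\<lambda>i. s n i - x i)" for n
    proof -
      have "l2_inner J k (s n) = 0" using s[of n] k by (auto simp: l2_orth_def)
      hence "cmod (l2_inner J k x) = cmod (l2_inner J k (\<lambda>i. s n i - x i))"
        by (simp add: l2_inner_diff_right[OF s_l2 x k_l2])
      also have "\<dots> \<le> l2_norm J k * l2_norm J (\<lambda>i. s n i - x i)"
        using k_l2 by (intro l2_cauchy_schwarz l2_diff s_l2 x)
      finally show ?thesis .
    qed
    hence "cmod (l2_inner J k x) \<le> l2_norm J k * 0"
      by (intro LIMSEQ_le[OF tendsto_const tendsto_mult[OF tendsto_const lim]]) auto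
    thus ?thesis by simp
  qed
  thus "x \<in> l2_orth J L" using x by (simp add: l2_orth_def)
qed

lemma subspace_Abs_ell2_image:
  assumes K: "l2_closed_subspace J K" shows "subspace (Abs_ell2 ` K)"
  unfolding subspace_def
proof (intro conjI ballI allI)
  have "(0::'a ell2) = Abs_ell2 (\<lambda>_. 0)" by (rule ell2_eqI) simp
  thus "(0::'a ell2) \<in> Abs_ell2 ` K" using l2_closed_subspace_zero[OF K] by simp
next
  fix a b assume "a \<in> Abs_ell2 ` K" "b \<in> Abs_ell2 ` K"
  then obtain x y where "x \<in> K" "y \<in> K" "a = Abs_ell2 x" "b = Abs_ell2 y" by blast
  moreover have "Abs_ell2 x + Abs_ell2 y = Abs_ell2 (\<lambda>i. x i + y i)"
    using calculation l2_closed_subspace_subset[OF K] by (intro Abs_ell2_add[symmetric]) auto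
  ultimately show "a + b \<in> Abs_ell2 ` K" using l2_closed_subspace_add[OF K] by auto
next
  fix c :: real and a assume "a \<in> Abs_ell2 ` K"
  then obtain x where x: "x \<in> K" "a = Abs_ell2 x" by blast
  have x_l2: "x \<in> l2 J" using x l2_closed_subspace_subset[OF K] by blast
  have "c *\<^sub>R Abs_ell2 x = Abs_ell2 (\<lambda>i. complex_of_real c * x i)"
    using Rep_ell2_Abs_ell2_l2[OF x_l2] Rep_ell2_Abs_ell2_l2[OF l2_scale[OF x_l2]] by (intro ell2_eqI) simp
  thus "c *\<^sub>R a \<in> Abs_ell2 ` K" using l2_closed_subspace_scale[OF K x(1)] x by auto
qed

lemma closed_Abs_ell2_image:
  assumes K: "l2_closed_subspace J K" shows "closed (Abs_ell2 ` K)"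
  unfolding closed_sequential_limits
proof (intro allI impI)
  fix s l assume sl: "(\<forall>n. s n \<in> Abs_ell2 ` K) \<and> s \<longlonglongrightarrow> l"
  hence "\<forall>n. \<exists>x. x \<in> K \<and> s n = Abs_ell2 x" by blast
  then obtain x where x: "\<And>n. x n \<in> K" "\<And>n. s n = Abs_ell2 (x n)" by metis
  have s: "s \<longlonglongrightarrow> l" using sl by blast
  have x_l2: "x n \<in> l2 J" for n using x l2_closed_subspace_subset[OF K] by blast
  have "Rep_ell2 l i = 0" if i: "i \<notin> J" for i
  proof (rule ccontr)
    assume "Rep_ell2 l i \<noteq> 0"
    hence "0 < cmod (Rep_ell2 l i)" by simp
    from LIMSEQ_D[OF s this] obtain n where n: "norm (s n - l) < cmod (Rep_ell2 l i)" by blast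
    have "Rep_ell2 (s n - l) i = - Rep_ell2 l i"
      using x(2)[of n] Rep_ell2_Abs_ell2_l2[OF x_l2] i by (simp add: l2_zero_outside[OF x_l2])
    thus False using n norm_Rep_ell2_le[of "s n - l" i] by simp
  qed
  hence l_l2: "Rep_ell2 l \<in> l2 J" by (rule l2_UNIV_imp_l2[rotated]) simp_all
  have "l2_norm J (\<lambda>i. x n i - Rep_ell2 l i) = norm (s n - l)" for n
    using norm_Abs_ell2[OF l2_diff[OF x_l2[of n] l_l2]] Abs_ell2_diff[OF x_l2[of n] l_l2] x(2)[of n]
    by (simp add: Rep_ell2_inverse)
  moreover have "(\<lambda>n. norm (s n - l)) \<longlonglongrightarrow> 0"
    by (intro tendsto_norm_zero LIM_zero s)
  ultimately have "Rep_ell2 l \<in> K"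
    using l2_closed_subspace_limit[OF K x(1) l_l2] by simp
  thus "l \<in> Abs_ell2 ` K" by (metis Rep_ell2_inverse image_eqI)
qed

lemma l2_orth_orth_subset:
  assumes K: "l2_closed_subspace J K" shows "l2_orth J (l2_orth J K) \<subseteq> K"
proof
  fix y assume y: "y \<in> l2_orth J (l2_orth J K)"
  have K_l2: "K \<subseteq> l2 J" by (rule l2_closed_subspace_subset[OF K])
  have y_l2: "y \<in> l2 J" using y l2_orth_subset by blast
  obtain q where q: "q \<in> K" and orth: "\<forall>v\<in>Abs_ell2 ` K. inner (Abs_ell2 y - Abs_ell2 q) v = 0"
    using orthogonal_projection_exists[OF closed_Abs_ell2_image[OF K] subspace_Abs_ell2_image[OF K]]
    by blast
  have q_l2: "q \<in> l2 J" using q K_l2 by blast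
  define w where "w = (\<lambda>i. y i - q i)"
  have w_l2: "w \<in> l2 J" unfolding w_def using y_l2 q_l2 by (rule l2_diff)
  have "l2_inner J w k = 0" if k: "k \<in> K" for k
  proof -
    have k_l2: "k \<in> l2 J" using k K_l2 by blast
    have "Abs_ell2 y - Abs_ell2 q = Abs_ell2 w" unfolding w_def by (rule Abs_ell2_diff[OF y_l2 q_l2, symmetric])
    hence "inner (Abs_ell2 w) (Abs_ell2 k) = 0" "inner (Abs_ell2 w) (Abs_ell2 (\<lambda>i. \<i> * k i)) = 0"
      using orth k l2_closed_subspace_scale[OF K k] by auto
    hence "Re (l2_inner J w k) = 0" "Re (l2_inner J w (\<lambda>i. \<i> * k i)) = 0"
      using inner_Abs_ell2[OF w_l2 k_l2] inner_Abs_ell2[OF w_l2 l2_scale[OF k_l2]] by simp_all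
    thus ?thesis using w_l2 k_l2 by (simp add: l2_inner_scale_right complex_eq_iff)
  qed
  hence w_orth: "w \<in> l2_orth J K" using w_l2 by (simp add: l2_orth_def l2_inner_eq_0_commute)
  have "l2_inner J w w = l2_inner J w y - l2_inner J w q"
    unfolding w_def by (rule l2_inner_diff_right[OF y_l2 q_l2]) (simp add: w_def[symmetric] w_l2)
  also have "l2_inner J w y = 0" using y w_orth by (simp add: l2_orth_def)
  also have "l2_inner J w q = 0" using w_orth q by (simp add: l2_orth_def l2_inner_eq_0_commute)
  finally have "w = (\<lambda>_. 0)" using w_l2 l2_inner_self_eq_0D by simp
  hence "y = q" by (auto simp: w_def fun_eq_iff)
  thus "y \<in> K" using q by simp
qed

lemma l2_orth_orth:
  assumes "l2_closed_subspace J K" shows "l2_orth J (l2_orth J K) = K"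
  using l2_orth_orth_subset[OF assms] l2_closed_subspace_subset[OF assms]
  by (auto simp: l2_orth_def l2_inner_eq_0_commute)

lemma l2_orth_invariant:
  assumes "K \<subseteq> l2 J" and S: "\<And>y. y \<in> l2 J \<Longrightarrow> S y \<in> l2 J"
    and adj: "\<And>x y. x \<in> l2 J \<Longrightarrow> y \<in> l2 J \<Longrightarrow> l2_inner J (T x) y = l2_inner J x (S y)"
    and "T ` K \<subseteq> K"
  shows "S ` l2_orth J K \<subseteq> l2_orth J K"
proof clarify
  fix y assume y: "y \<in> l2_orth J K"
  have "l2_inner J k (S y) = 0" if k: "k \<in> K" for k
  proof -
    have "k \<in> l2 J" "T k \<in> K" using k assms(1,4) by auto
    thus ?thesis using y adj[of k y] by (simp add: l2_orth_def)
  qed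
  thus "S y \<in> l2_orth J K" using y S by (simp add: l2_orth_def)
qed

section \<open>Bounded operators on l2\<close>

lemma l2_linear_l2: "l2_linear I T \<Longrightarrow> x \<in> l2 I \<Longrightarrow> T x \<in> l2 I"
  and l2_linear_add: "l2_linear I T \<Longrightarrow> x \<in> l2 I \<Longrightarrow> y \<in> l2 I \<Longrightarrow>
    T (\<lambda>i. x i + y i) = (\<lambda>i. T x i + T y i)"
  and l2_linear_scale: "l2_linear I T \<Longrightarrow> x \<in> l2 I \<Longrightarrow> T (\<lambda>i. c * x i) = (\<lambda>i. c * T x i)"
  by (simp_all add: l2_linear_def)

lemma l2_linear_zero: "l2_linear I T \<Longrightarrow> T (\<lambda>_. 0) = (\<lambda>_. 0)"
  using l2_linear_scale[of I T "\<lambda>_. 0" 0] by simp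

lemma l2_linear_diff: assumes "l2_linear I T" "x \<in> l2 I" "y \<in> l2 I"
  shows "T (\<lambda>i. x i - y i) = (\<lambda>i. T x i - T y i)"
  using l2_linear_add[OF assms(1,2) l2_scale[OF assms(3), of "-1"]]
    l2_linear_scale[OF assms(1,3), of "-1"] by simp

definition l2_bounded :: "'i set \<Rightarrow> (('i \<Rightarrow> complex) \<Rightarrow> ('i \<Rightarrow> complex)) \<Rightarrow> bool" where
  "l2_bounded I T \<longleftrightarrow> l2_linear I T \<and> (\<exists>C. \<forall>x\<in>l2 I. l2_norm I (T x) \<le> C * l2_norm I x)"

lemma l2_boundedE:
  assumes "l2_bounded I T"
  obtains C where "l2_linear I T" "0 \<le> C" "\<And>x. x \<in> l2 I \<Longrightarrow> l2_norm I (T x) \<le> C * l2_norm I x"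
proof -
  obtain C where C: "\<forall>x\<in>l2 I. l2_norm I (T x) \<le> C * l2_norm I x" "l2_linear I T"
    using assms by (auto simp: l2_bounded_def)
  have "l2_norm I (T x) \<le> \<bar>C\<bar> * l2_norm I x" if "x \<in> l2 I" for x
    using C(1) that l2_norm_nonneg[of I x] by (smt (verit) mult_right_mono)
  thus thesis using that[OF C(2) abs_ge_zero] by blast
qed

lemma l2_bounded_id: "l2_bounded I (\<lambda>x. x)"
  unfolding l2_bounded_def l2_linear_def by (auto intro!: exI[of _ 1])

lemma l2_bounded_comp: assumes "l2_bounded I T" "l2_bounded I S" shows "l2_bounded I (\<lambda>x. T (S x))"
proof -
  obtain C where T: "l2_linear I T" "0 \<le> C" "\<And>x. x \<in> l2 I \<Longrightarrow> l2_norm I (T x) \<le> C * l2_norm I x"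
    using l2_boundedE[OF assms(1)] by blast
  obtain D where S: "l2_linear I S" "0 \<le> D" "\<And>x. x \<in> l2 I \<Longrightarrow> l2_norm I (S x) \<le> D * l2_norm I x"
    using l2_boundedE[OF assms(2)] by blast
  have "l2_norm I (T (S x)) \<le> (C * D) * l2_norm I x" if x: "x \<in> l2 I" for x
    using T(3)[OF l2_linear_l2[OF S(1) x]] mult_left_mono[OF S(3)[OF x] T(2)] by simp
  moreover have "l2_linear I (\<lambda>x. T (S x))"
    using T(1) S(1) unfolding l2_linear_def by (auto simp: l2_linear_l2[OF S(1)])
  ultimately show ?thesis unfolding l2_bounded_def by blast
qed

lemma l2_bounded_diff: assumes "l2_bounded I T" "l2_bounded I S"
  shows "l2_bounded I (\<lambda>x i. T x i - S x i)"
proof -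
  obtain C where T: "l2_linear I T" "0 \<le> C" "\<And>x. x \<in> l2 I \<Longrightarrow> l2_norm I (T x) \<le> C * l2_norm I x"
    using l2_boundedE[OF assms(1)] by blast
  obtain D where S: "l2_linear I S" "0 \<le> D" "\<And>x. x \<in> l2 I \<Longrightarrow> l2_norm I (S x) \<le> D * l2_norm I x"
    using l2_boundedE[OF assms(2)] by blast
  have "l2_norm I (\<lambda>i. T x i - S x i) \<le> (C + D) * l2_norm I x" if x: "x \<in> l2 I" for x
  proof -
    have "l2_norm I (\<lambda>i. T x i + (-1) * S x i) \<le> l2_norm I (T x) + l2_norm I (\<lambda>i. (-1) * S x i)"
      using x by (intro l2_triangle l2_linear_l2[OF T(1)] l2_scale l2_linear_l2[OF S(1)])
    also have "\<dots> = l2_norm I (T x) + l2_norm I (S x)" by (simp only: l2_norm_scale) simp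
    finally show ?thesis using T(3)[OF x] S(3)[OF x] by (simp add: distrib_right)
  qed
  moreover have "l2_linear I (\<lambda>x i. T x i - S x i)"
    unfolding l2_linear_def
    using T(1) S(1) by (auto simp: l2_linear_add l2_linear_scale l2_linear_l2 l2_diff algebra_simps)
  ultimately show ?thesis unfolding l2_bounded_def by blast
qed

lemma orth_proj_linear: "orth_proj I P \<Longrightarrow> l2_linear I P"
  and orth_proj_idem: "orth_proj I P \<Longrightarrow> x \<in> l2 I \<Longrightarrow> P (P x) = P x"
  and orth_proj_adjoint: "orth_proj I P \<Longrightarrow> x \<in> l2 I \<Longrightarrow> y \<in> l2 I \<Longrightarrow>
    l2_inner I (P x) y = l2_inner I x (P y)"
  by (simp_all add: orth_proj_def)

lemma orth_proj_norm_le: assumes P: "orth_proj I P" and x: "x \<in> l2 I"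
  shows "l2_norm I (P x) \<le> l2_norm I x"
proof -
  have Px: "P x \<in> l2 I" by (rule l2_linear_l2[OF orth_proj_linear[OF P] x])
  have "complex_of_real ((l2_norm I (P x))^2) = l2_inner I x (P x)"
    using orth_proj_adjoint[OF P x Px] orth_proj_idem[OF P x] l2_inner_self[OF Px] by simp
  hence "(l2_norm I (P x))^2 = cmod (l2_inner I x (P x))"
    by (metis norm_of_real abs_of_nonneg zero_le_power2)
  also have "\<dots> \<le> l2_norm I x * l2_norm I (P x)" by (rule l2_cauchy_schwarz[OF x Px])
  finally have "l2_norm I (P x) * l2_norm I (P x) \<le> l2_norm I x * l2_norm I (P x)"
    by (simp add: power2_eq_square)
  moreover have "0 \<le> l2_norm I (P x)" by (rule l2_norm_nonneg)
  ultimately show ?thesis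
    by (metis mult_right_le_imp_le mult_eq_0_iff l2_norm_nonneg order.order_iff_strict)
qed

lemma l2_bounded_orth_proj: "orth_proj I P \<Longrightarrow> l2_bounded I P"
  unfolding l2_bounded_def using orth_proj_linear orth_proj_norm_le by (metis mult_1)

lemma unitary_op_linear: "unitary_op I U \<Longrightarrow> l2_linear I U"
  and unitary_op_inner: "unitary_op I U \<Longrightarrow> x \<in> l2 I \<Longrightarrow> y \<in> l2 I \<Longrightarrow>
    l2_inner I (U x) (U y) = l2_inner I x y"
  by (simp_all add: unitary_op_def)

lemma unitary_op_surj: "unitary_op I U \<Longrightarrow> y \<in> l2 I \<Longrightarrow> \<exists>w\<in>l2 I. U w = y"
  unfolding unitary_op_def by (metis imageE)

lemma unitary_op_norm: assumes U: "unitary_op I U" and x: "x \<in> l2 I"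
  shows "l2_norm I (U x) = l2_norm I x"
proof -
  have "complex_of_real ((l2_norm I (U x))^2) = complex_of_real ((l2_norm I x)^2)"
    using unitary_op_inner[OF U x x] l2_inner_self[OF l2_linear_l2[OF unitary_op_linear[OF U] x]]
      l2_inner_self[OF x] by simp
  hence "(l2_norm I (U x))^2 = (l2_norm I x)^2" using of_real_eq_iff by blast
  thus ?thesis using l2_norm_nonneg by (metis power2_eq_iff_nonneg)
qed

lemma l2_bounded_unitary_op: "unitary_op I U \<Longrightarrow> l2_bounded I U"
  unfolding l2_bounded_def using unitary_op_linear unitary_op_norm by (metis mult_1 order_refl)

lemma l2_adj_unitary_op: assumes U: "unitary_op I U" and w: "w \<in> l2 I"
  shows "l2_adj I U (U w) = w"
  unfolding l2_adj_def
proof (rule the_equality)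
  show "w \<in> l2 I \<and> (\<forall>x\<in>l2 I. l2_inner I (U x) (U w) = l2_inner I x w)"
    using w unitary_op_inner[OF U _ w] by blast
  fix z assume z: "z \<in> l2 I \<and> (\<forall>x\<in>l2 I. l2_inner I (U x) (U w) = l2_inner I x z)"
  have d: "(\<lambda>i. z i - w i) \<in> l2 I" using z w by (intro l2_diff) auto
  have "l2_inner I (\<lambda>i. z i - w i) z = l2_inner I (\<lambda>i. z i - w i) w"
    using z unitary_op_inner[OF U d w] d by auto
  hence "l2_inner I (\<lambda>i. z i - w i) (\<lambda>i. z i - w i) = 0"
    using l2_inner_diff_right[OF _ w d, of z] z by simp
  hence "(\<lambda>i. z i - w i) = (\<lambda>_. 0)" by (rule l2_inner_self_eq_0D[OF d])
  thus "z = w" by (auto simp: fun_eq_iff)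
qed

context
  fixes I :: "'i set" and U :: "('i \<Rightarrow> complex) \<Rightarrow> ('i \<Rightarrow> complex)"
  assumes U: "unitary_op I U"
begin

lemma l2_adj_l2: "y \<in> l2 I \<Longrightarrow> l2_adj I U y \<in> l2 I"
  and unitary_op_l2_adj: "y \<in> l2 I \<Longrightarrow> U (l2_adj I U y) = y"
  using unitary_op_surj[OF U] l2_adj_unitary_op[OF U] by metis+

lemma l2_linear_l2_adj: "l2_linear I (l2_adj I U)"
  unfolding l2_linear_def
proof (intro conjI ballI allI)
  fix x y assume x: "x \<in> l2 I" and y: "y \<in> l2 I"
  show "l2_adj I U x \<in> l2 I" by (rule l2_adj_l2[OF x])
  have "U (\<lambda>i. l2_adj I U x i + l2_adj I U y i) = (\<lambda>i. x i + y i)"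
    using l2_linear_add[OF unitary_op_linear[OF U] l2_adj_l2[OF x] l2_adj_l2[OF y]]
    by (simp add: unitary_op_l2_adj x y)
  thus "l2_adj I U (\<lambda>i. x i + y i) = (\<lambda>i. l2_adj I U x i + l2_adj I U y i)"
    using l2_adj_unitary_op[OF U l2_add[OF l2_adj_l2[OF x] l2_adj_l2[OF y]]] by simp
next
  fix c x assume x: "x \<in> l2 I"
  have "U (\<lambda>i. c * l2_adj I U x i) = (\<lambda>i. c * x i)"
    using l2_linear_scale[OF unitary_op_linear[OF U] l2_adj_l2[OF x]] by (simp add: unitary_op_l2_adj x)
  thus "l2_adj I U (\<lambda>i. c * x i) = (\<lambda>i. c * l2_adj I U x i)"
    using l2_adj_unitary_op[OF U l2_scale[OF l2_adj_l2[OF x]], of c] by simp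
qed

lemma l2_bounded_l2_adj: "l2_bounded I (l2_adj I U)"
  unfolding l2_bounded_def
  using l2_linear_l2_adj unitary_op_norm[OF U l2_adj_l2] unitary_op_l2_adj by (metis mult_1 order_refl)

lemma l2_inner_l2_adj_left: "x \<in> l2 I \<Longrightarrow> y \<in> l2 I \<Longrightarrow> l2_inner I (l2_adj I U x) y = l2_inner I x (U y)"
  using unitary_op_inner[OF U l2_adj_l2] unitary_op_l2_adj by metis

lemma l2_inner_l2_adj_right: "x \<in> l2 I \<Longrightarrow> y \<in> l2 I \<Longrightarrow> l2_inner I (U x) y = l2_inner I x (l2_adj I U y)"
  using unitary_op_inner[OF U _ l2_adj_l2] unitary_op_l2_adj by metis

end

section \<open>The Hardy space through Taylor coefficients\<close>

definition l2_seq :: "'i set \<Rightarrow> (nat \<Rightarrow> 'i \<Rightarrow> complex) \<Rightarrow> bool" where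
  "l2_seq I a \<longleftrightarrow> (\<forall>n. a n \<in> l2 I) \<and> summable (\<lambda>n. (l2_norm I (a n))^2)"

definition h2_series :: "(nat \<Rightarrow> 'i \<Rightarrow> complex) \<Rightarrow> complex \<Rightarrow> 'i \<Rightarrow> complex" where
  "h2_series a = (\<lambda>z i. if z \<in> ball 0 1 then (\<Sum>n. a n i * z^n) else 0)"

lemma l2_seqD: "l2_seq I a \<Longrightarrow> a n \<in> l2 I" "l2_seq I a \<Longrightarrow> summable (\<lambda>n. (l2_norm I (a n))^2)"
  by (auto simp: l2_seq_def)

lemma l2_seq_norm_le: assumes "l2_seq I a"
  shows "l2_norm I (a n) \<le> sqrt (\<Sum>n. (l2_norm I (a n))^2)"
proof -
  have "sum (\<lambda>n. (l2_norm I (a n))^2) {n} \<le> (\<Sum>n. (l2_norm I (a n))^2)"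
    using assms by (intro sum_le_suminf) (auto simp: l2_seq_def)
  hence "(l2_norm I (a n))^2 \<le> (\<Sum>n. (l2_norm I (a n))^2)" by simp
  thus ?thesis using l2_norm_nonneg real_le_rsqrt by blast
qed

lemma summable_h2_series: assumes a: "l2_seq I a" and z: "z \<in> ball 0 1"
  shows "summable (\<lambda>n. a n i * z^n)"
proof (rule summable_comparison_test)
  define B where "B = sqrt (\<Sum>n. (l2_norm I (a n))^2)"
  have "cmod (a n i) \<le> B" for n
    unfolding B_def using l2_coord_le_norm[OF l2_seqD(1)[OF a]] l2_seq_norm_le[OF a] by (rule order_trans)
  thus "\<exists>N. \<forall>n\<ge>N. norm (a n i * z ^ n) \<le> B * norm z ^ n"
    by (auto simp: norm_mult norm_power intro!: mult_right_mono)
  show "summable (\<lambda>n. B * norm z ^ n)"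
    using z by (intro summable_mult summable_geometric) simp
qed

lemma h2_series_sums: assumes "l2_seq I a" "z \<in> ball 0 1"
  shows "(\<lambda>n. a n i * z^n) sums (h2_series a z i)"
  using summable_sums[OF summable_h2_series[OF assms]] assms(2) by (simp add: h2_series_def)

lemma h2_series_outside: "z \<notin> ball 0 1 \<Longrightarrow> h2_series a z = (\<lambda>_. 0)"
  by (simp add: h2_series_def fun_eq_iff)

lemma h2_series_in_H2: assumes "l2_seq I a" shows "h2_series a \<in> H2 I"
  unfolding H2_def
  using assms h2_series_sums[OF assms] by (auto simp: l2_seq_def h2_series_outside)

lemma H2_imp_h2_series: assumes "F \<in> H2 I" obtains a where "l2_seq I a" "F = h2_series a"
proof -
  from assms obtain a where out: "\<forall>z. z \<notin> ball 0 1 \<longrightarrow> F z = (\<lambda>_. 0)"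
    and a: "\<forall>n. a n \<in> l2 I" "summable (\<lambda>n. (l2_norm I (a n))^2)"
    and s: "\<forall>z\<in>ball 0 1. \<forall>i. (\<lambda>n. a n i * z ^ n) sums (F z i)"
    unfolding H2_def by blast
  have a_seq: "l2_seq I a" using a by (simp add: l2_seq_def)
  have "F z i = h2_series a z i" for z i
  proof (cases "z \<in> ball 0 1")
    case True
    thus ?thesis using s h2_series_sums[OF a_seq True] sums_unique2 by blast
  qed (simp add: out h2_series_outside)
  thus thesis using that[OF a_seq] by blast
qed

lemma h2_coeff_h2_series: assumes a: "l2_seq I a" shows "h2_coeff (h2_series a) n = a n"
proof
  fix i
  define A where "A = Abs_fps (\<lambda>n. a n i)"
  have "(\<lambda>z. h2_series a z i) has_fps_expansion A"
    unfolding has_fps_expansion_def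
  proof
    have "summable (\<lambda>n. a n i * (1/2 :: complex) ^ n)"
      using a by (intro summable_h2_series) auto
    hence "fps_conv_radius A \<ge> norm (1/2 :: complex)"
      unfolding fps_conv_radius_def A_def by (intro conv_radius_geI) simp
    thus "0 < fps_conv_radius A"
      by (simp add: zero_less_iff_neq_zero order_less_le_trans[of 0 "ereal (1/2)"])
    have "eventually (\<lambda>z. z \<in> ball 0 1) (nhds (0::complex))"
      by (intro eventually_nhds_in_open) auto
    thus "eventually (\<lambda>z. eval_fps A z = h2_series a z i) (nhds 0)"
      by eventually_elim (use h2_series_sums[OF a] in \<open>simp add: eval_fps_def A_def sums_iff\<close>)
  qed
  from fps_nth_fps_expansion[OF this, of n] show "h2_coeff (h2_series a) n i = a n i"
    by (simp add: h2_coeff_def A_def)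
qed

lemma H2_h2_coeff: assumes "F \<in> H2 I"
  shows "l2_seq I (h2_coeff F)" "F = h2_series (h2_coeff F)"
proof -
  obtain a where a: "l2_seq I a" "F = h2_series a" using H2_imp_h2_series[OF assms] .
  have "h2_coeff F = a" by (rule ext) (simp add: a(2) h2_coeff_h2_series[OF a(1)])
  thus "l2_seq I (h2_coeff F)" "F = h2_series (h2_coeff F)" using a by auto
qed

lemma l2_seq_zero [simp]: "l2_seq I (\<lambda>n i. 0)"
  by (simp add: l2_seq_def l2_norm_def)

lemma h2_series_zero [simp]: "h2_series (\<lambda>n i. 0) = (\<lambda>_ _. 0)"
  by (simp add: h2_series_def fun_eq_iff)

lemma l2_seq_add: assumes "l2_seq I a" "l2_seq I b" shows "l2_seq I (\<lambda>n i. a n i + b n i)"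
  unfolding l2_seq_def
proof (intro conjI allI)
  show "(\<lambda>i. a n i + b n i) \<in> l2 I" for n using assms by (intro l2_add l2_seqD)
  show "summable (\<lambda>n. (l2_norm I (\<lambda>i. a n i + b n i))^2)"
  proof (rule summable_comparison_test)
    show "summable (\<lambda>n. 2 * (l2_norm I (a n))^2 + 2 * (l2_norm I (b n))^2)"
      using assms by (intro summable_add summable_mult l2_seqD)
    have "(l2_norm I (\<lambda>i. a n i + b n i))^2 \<le> 2 * (l2_norm I (a n))^2 + 2 * (l2_norm I (b n))^2" for n
    proof -
      have "(l2_norm I (\<lambda>i. a n i + b n i))^2 \<le> (l2_norm I (a n) + l2_norm I (b n))^2"
        using assms l2_norm_nonneg by (intro power_mono l2_triangle l2_seqD) auto
      thus ?thesis using sq_add_le order_trans by blast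
    qed
    thus "\<exists>N. \<forall>n\<ge>N. norm ((l2_norm I (\<lambda>i. a n i + b n i))^2)
        \<le> 2 * (l2_norm I (a n))^2 + 2 * (l2_norm I (b n))^2"
      by simp
  qed
qed

lemma l2_seq_scale: assumes "l2_seq I a" shows "l2_seq I (\<lambda>n i. c * a n i)"
  unfolding l2_seq_def
proof (intro conjI allI)
  show "(\<lambda>i. c * a n i) \<in> l2 I" for n using assms by (intro l2_scale l2_seqD)
  have "summable (\<lambda>n. (cmod c)^2 * (l2_norm I (a n))^2)"
    using assms by (intro summable_mult l2_seqD)
  thus "summable (\<lambda>n. (l2_norm I (\<lambda>i. c * a n i))^2)"
    by (simp add: l2_norm_scale power_mult_distrib)
qed

lemma h2_series_add: assumes "l2_seq I a" "l2_seq I b"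
  shows "h2_series (\<lambda>n i. a n i + b n i) = (\<lambda>z i. h2_series a z i + h2_series b z i)"
proof (intro ext)
  fix z i
  show "h2_series (\<lambda>n i. a n i + b n i) z i = h2_series a z i + h2_series b z i"
  proof (cases "z \<in> ball 0 1")
    case True
    have "(\<lambda>n. a n i * z^n + b n i * z^n) sums (h2_series a z i + h2_series b z i)"
      by (intro sums_add h2_series_sums[OF assms(1) True] h2_series_sums[OF assms(2) True])
    thus ?thesis using h2_series_sums[OF l2_seq_add[OF assms] True, of i]
      by (simp add: distrib_right sums_unique2)
  qed (simp add: h2_series_outside)
qed

lemma h2_series_scale: assumes "l2_seq I a"
  shows "h2_series (\<lambda>n i. c * a n i) = (\<lambda>z i. c * h2_series a z i)"
proof (intro ext)
  fix z i
  show "h2_series (\<lambda>n i. c * a n i) z i = c * h2_series a z i"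
  proof (cases "z \<in> ball 0 1")
    case True
    have "(\<lambda>n. c * (a n i * z^n)) sums (c * h2_series a z i)"
      by (intro sums_mult h2_series_sums[OF assms True])
    thus ?thesis using h2_series_sums[OF l2_seq_scale[OF assms, of c] True, of i]
      by (simp add: mult.assoc sums_unique2)
  qed (simp add: h2_series_outside)
qed

lemma h2_series_diff: assumes "l2_seq I a" "l2_seq I b"
  shows "h2_series (\<lambda>n i. a n i - b n i) = (\<lambda>z i. h2_series a z i - h2_series b z i)"
  using h2_series_add[OF assms(1) l2_seq_scale[OF assms(2), of "-1"]]
    h2_series_scale[OF assms(2), of "-1"] by simp

lemma summable_l2_inner_seq: assumes a: "l2_seq I a" and b: "l2_seq I b"
  shows "summable (\<lambda>n. l2_inner I (a n) (b n))"
proof (rule summable_comparison_test)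
  show "summable (\<lambda>n. (l2_norm I (a n))^2 + (l2_norm I (b n))^2)"
    using assms by (intro summable_add l2_seqD)
  have "norm (l2_inner I (a n) (b n)) \<le> (l2_norm I (a n))^2 + (l2_norm I (b n))^2" for n
  proof -
    have "norm (l2_inner I (a n) (b n)) \<le> l2_norm I (a n) * l2_norm I (b n)"
      using assms by (intro l2_cauchy_schwarz l2_seqD)
    also have "\<dots> \<le> (l2_norm I (a n))^2 + (l2_norm I (b n))^2"
    proof -
      have "0 \<le> (l2_norm I (a n) - l2_norm I (b n))^2" by simp
      thus ?thesis using mult_nonneg_nonneg[OF l2_norm_nonneg l2_norm_nonneg, of I "a n" I "b n"]
        by (simp add: power2_diff)
    qed
    finally show ?thesis .
  qed
  thus "\<exists>N. \<forall>n\<ge>N. norm (l2_inner I (a n) (b n)) \<le> (l2_norm I (a n))^2 + (l2_norm I (b n))^2"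
    by blast
qed

lemma h2_inner_h2_series: "l2_seq I a \<Longrightarrow> l2_seq I b \<Longrightarrow>
    h2_inner I (h2_series a) (h2_series b) = (\<Sum>n. l2_inner I (a n) (b n))"
  by (simp add: h2_inner_def h2_coeff_h2_series)

lemma h2_norm_h2_series: "l2_seq I a \<Longrightarrow> h2_norm I (h2_series a) = sqrt (\<Sum>n. (l2_norm I (a n))^2)"
  by (simp add: h2_norm_def h2_coeff_h2_series)

lemma l2_norm_h2_coeff_le: assumes "F \<in> H2 I" shows "l2_norm I (h2_coeff F n) \<le> h2_norm I F"
  using l2_seq_norm_le[OF H2_h2_coeff(1)[OF assms]] by (simp add: h2_norm_def)

lemma H2_add: assumes "F \<in> H2 I" "G \<in> H2 I"
  shows "(\<lambda>z i. F z i + G z i) \<in> H2 I"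
    and "h2_coeff (\<lambda>z i. F z i + G z i) n = (\<lambda>i. h2_coeff F n i + h2_coeff G n i)"
proof -
  obtain a b where a: "l2_seq I a" "F = h2_series a" and b: "l2_seq I b" "G = h2_series b"
    using H2_imp_h2_series assms by metis
  show "(\<lambda>z i. F z i + G z i) \<in> H2 I" "h2_coeff (\<lambda>z i. F z i + G z i) n = (\<lambda>i. h2_coeff F n i + h2_coeff G n i)"
    unfolding a(2) b(2) h2_series_add[OF a(1) b(1), symmetric]
    by (simp_all add: h2_series_in_H2 l2_seq_add a(1) b(1) h2_coeff_h2_series[OF l2_seq_add[OF a(1) b(1)]]
        h2_coeff_h2_series[OF a(1)] h2_coeff_h2_series[OF b(1)])
qed

lemma H2_scale: assumes "F \<in> H2 I"
  shows "(\<lambda>z i. c * F z i) \<in> H2 I" and "h2_coeff (\<lambda>z i. c * F z i) n = (\<lambda>i. c * h2_coeff F n i)"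
proof -
  obtain a where a: "l2_seq I a" "F = h2_series a" using H2_imp_h2_series assms by metis
  show "(\<lambda>z i. c * F z i) \<in> H2 I" "h2_coeff (\<lambda>z i. c * F z i) n = (\<lambda>i. c * h2_coeff F n i)"
    unfolding a(2) h2_series_scale[OF a(1), symmetric]
    by (simp_all add: h2_series_in_H2 l2_seq_scale a(1) h2_coeff_h2_series[OF l2_seq_scale[OF a(1)]]
        h2_coeff_h2_series[OF a(1)])
qed

lemma H2_diff: assumes "F \<in> H2 I" "G \<in> H2 I"
  shows "(\<lambda>z i. F z i - G z i) \<in> H2 I"
    and "h2_coeff (\<lambda>z i. F z i - G z i) n = (\<lambda>i. h2_coeff F n i - h2_coeff G n i)"
  using H2_add[OF assms(1) H2_scale(1)[OF assms(2), of "-1"]]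
    H2_scale(2)[OF assms(2), of "-1"] by simp_all

lemma l2_case_prod: assumes a: "l2_seq I a" shows "case_prod a \<in> l2 (UNIV \<times> I)"
proof (rule l2_memI)
  fix p :: "nat \<times> _" assume "p \<notin> UNIV \<times> I"
  thus "case_prod a p = 0" by (cases p) (auto simp: l2_zero_outside[OF l2_seqD(1)[OF a]])
next
  show "(\<lambda>p. (cmod (case_prod a p))^2) summable_on UNIV \<times> I"
  proof (rule summable_on_SigmaI[where g="\<lambda>n. (l2_norm I (a n))^2"])
    show "((\<lambda>i. (cmod (case_prod a (n, i)))^2) has_sum (l2_norm I (a n))^2) I" for n
      using has_sum_infsum[OF l2_summable_sq[OF l2_seqD(1)[OF a, of n]]] by (simp add: l2_norm_sq)
    show "(\<lambda>n. (l2_norm I (a n))^2) summable_on UNIV"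
      by (rule summable_nonneg_imp_summable_on[OF l2_seqD(2)[OF a]]) simp
  qed simp
qed

lemma l2_seq_curry: assumes x: "x \<in> l2 (UNIV \<times> I)" shows "l2_seq I (curry x)"
proof -
  have sq: "(\<lambda>(n, i). (cmod (x (n, i)))^2) summable_on Sigma UNIV (\<lambda>_. I)"
    using l2_summable_sq[OF x] by (simp add: case_prod_beta')
  have row: "(\<lambda>i. (cmod (x (n, i)))^2) summable_on I" for n
    using summable_on_SigmaD1[OF sq, of n] by simp
  have "curry x n \<in> l2 I" for n
    by (rule l2_memI) (use row l2_zero_outside[OF x] in auto)
  moreover have "(\<lambda>n. infsum (\<lambda>i. (cmod (x (n, i)))^2) I) summable_on UNIV"
    using summable_on_SigmaD[where f="\<lambda>p. (cmod (x p))^2" and A=UNIV and B="\<lambda>_. I"]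
      l2_summable_sq[OF x] row by simp
  hence "summable (\<lambda>n. (l2_norm I (curry x n))^2)"
    unfolding l2_norm_sq curry_def by (rule summable_on_imp_summable)
  ultimately show ?thesis by (simp add: l2_seq_def)
qed

lemma l2_inner_case_prod: assumes a: "l2_seq I a" and b: "l2_seq I b"
  shows "l2_inner (UNIV \<times> I) (case_prod a) (case_prod b) = (\<Sum>n. l2_inner I (a n) (b n))"
proof -
  have S: "(\<lambda>(n, i). a n i * cnj (b n i)) summable_on UNIV \<times> I"
    using l2_inner_summable[OF l2_case_prod[OF a] l2_case_prod[OF b]] by (simp add: case_prod_beta')
  have "l2_inner (UNIV \<times> I) (case_prod a) (case_prod b) = (\<Sum>\<^sub>\<infinity>n. l2_inner I (a n) (b n))"
    unfolding l2_inner_def using infsum_Sigma_banach[OF S] by (simp add: case_prod_beta')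
  also have "\<dots> = (\<Sum>n. l2_inner I (a n) (b n))"
    using has_sum_imp_sums[OF has_sum_infsum[OF summable_on_Sigma_banach[OF S]]]
    by (simp add: l2_inner_def sums_iff)
  finally show ?thesis .
qed

lemma l2_norm_case_prod: assumes a: "l2_seq I a"
  shows "l2_norm (UNIV \<times> I) (case_prod a) = sqrt (\<Sum>n. (l2_norm I (a n))^2)"
proof -
  have "complex_of_real ((l2_norm (UNIV \<times> I) (case_prod a))^2) = (\<Sum>n. l2_inner I (a n) (a n))"
    using l2_inner_case_prod[OF a a] l2_inner_self[OF l2_case_prod[OF a]] by simp
  also have "\<dots> = (\<Sum>n. complex_of_real ((l2_norm I (a n))^2))"
    using l2_inner_self[OF l2_seqD(1)[OF a]] by simp
  also have "\<dots> = complex_of_real (\<Sum>n. (l2_norm I (a n))^2)"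
    by (rule suminf_of_real[OF l2_seqD(2)[OF a], symmetric])
  finally have "(l2_norm (UNIV \<times> I) (case_prod a))^2 = (\<Sum>n. (l2_norm I (a n))^2)"
    using of_real_eq_iff by blast
  thus ?thesis using l2_norm_nonneg by (metis real_sqrt_unique)
qed

lemma h2_norm_eq_l2_norm_case_prod: assumes "F \<in> H2 I"
  shows "h2_norm I F = l2_norm (UNIV \<times> I) (case_prod (h2_coeff F))"
  by (simp add: h2_norm_def l2_norm_case_prod[OF H2_h2_coeff(1)[OF assms]])

lemma h2_inner_eq_l2_inner_case_prod: assumes "F \<in> H2 I" "G \<in> H2 I"
  shows "h2_inner I F G = l2_inner (UNIV \<times> I) (case_prod (h2_coeff F)) (case_prod (h2_coeff G))"
  by (simp add: h2_inner_def l2_inner_case_prod[OF H2_h2_coeff(1)[OF assms(1)] H2_h2_coeff(1)[OF assms(2)]])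

lemma h2_closed_subspace_subset: "h2_closed_subspace I M \<Longrightarrow> M \<subseteq> H2 I"
  and h2_closed_subspace_zero: "h2_closed_subspace I M \<Longrightarrow> (\<lambda>_ _. 0) \<in> M"
  and h2_closed_subspace_add: "h2_closed_subspace I M \<Longrightarrow> F \<in> M \<Longrightarrow> G \<in> M \<Longrightarrow>
    (\<lambda>z i. F z i + G z i) \<in> M"
  and h2_closed_subspace_scale: "h2_closed_subspace I M \<Longrightarrow> F \<in> M \<Longrightarrow> (\<lambda>z i. c * F z i) \<in> M"
  and h2_closed_subspace_limit: "h2_closed_subspace I M \<Longrightarrow> (\<And>n. s n \<in> M) \<Longrightarrow> F \<in> H2 I \<Longrightarrow>
    (\<lambda>n. h2_norm I (\<lambda>z i. s n z i - F z i)) \<longlonglongrightarrow> 0 \<Longrightarrow> F \<in> M"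
  unfolding h2_closed_subspace_def by blast+

lemma h2_closed_subspace_diff: assumes "h2_closed_subspace I M" "F \<in> M" "G \<in> M"
  shows "(\<lambda>z i. F z i - G z i) \<in> M"
  using h2_closed_subspace_add[OF assms(1,2) h2_closed_subspace_scale[OF assms(1,3), of "-1"]] by simp

lemma h2_orth_subset: "h2_orth I M \<subseteq> H2 I"
  by (auto simp: h2_orth_def)

lemma h2_inner_eq_0_commute: assumes "F \<in> H2 I" "G \<in> H2 I"
  shows "h2_inner I F G = 0 \<longleftrightarrow> h2_inner I G F = 0"
proof -
  have "(\<lambda>n. cnj (l2_inner I (h2_coeff F n) (h2_coeff G n))) sums cnj (h2_inner I F G)"
    using summable_l2_inner_seq[OF H2_h2_coeff(1)[OF assms(1)] H2_h2_coeff(1)[OF assms(2)]]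
    by (simp add: h2_inner_def sums_cnj summable_sums)
  hence "h2_inner I G F = cnj (h2_inner I F G)"
    by (simp add: h2_inner_def l2_inner_cnj sums_iff)
  thus ?thesis by simp
qed

(* Flattening the coefficients of F into a single l2 vector over UNIV \<times> I is an isometric
   isomorphism, so the double orthogonal complement can be computed in l2. *)
lemma l2_closed_subspace_h2_coeff_image:
  assumes M: "h2_closed_subspace I M"
  shows "l2_closed_subspace (UNIV \<times> I) ((\<lambda>F. case_prod (h2_coeff F)) ` M)"
    (is "l2_closed_subspace _ (?c ` M)")
proof -
  note MH = subsetD[OF h2_closed_subspace_subset[OF M]]
  have c_series: "?c (h2_series (curry x)) = x" if "x \<in> l2 (UNIV \<times> I)" for x
    using h2_coeff_h2_series[OF l2_seq_curry[OF that]] by (simp add: fun_eq_iff)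
  show ?thesis
    unfolding l2_closed_subspace_def
  proof (intro conjI allI ballI impI)
    show "?c ` M \<subseteq> l2 (UNIV \<times> I)" using l2_case_prod H2_h2_coeff(1) MH by blast
    have "?c (\<lambda>_ _. 0) = (\<lambda>_. 0)" using c_series[OF l2_zero] by (simp add: curry_def)
    thus "(\<lambda>_. 0) \<in> ?c ` M" by (rule image_eqI[OF sym h2_closed_subspace_zero[OF M]])
  next
    fix x y assume "x \<in> ?c ` M" "y \<in> ?c ` M"
    then obtain F G where FG: "F \<in> M" "G \<in> M" "x = ?c F" "y = ?c G" by blast
    hence "?c (\<lambda>z i. F z i + G z i) = (\<lambda>p. x p + y p)" using H2_add(2)[OF MH MH] by auto
    thus "(\<lambda>p. x p + y p) \<in> ?c ` M" by (rule image_eqI[OF sym h2_closed_subspace_add[OF M FG(1,2)]])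
  next
    fix c x assume "x \<in> ?c ` M"
    then obtain F where F: "F \<in> M" "x = ?c F" by blast
    hence "?c (\<lambda>z i. c * F z i) = (\<lambda>p. c * x p)" using H2_scale(2)[OF MH] by auto
    thus "(\<lambda>p. c * x p) \<in> ?c ` M" by (rule image_eqI[OF sym h2_closed_subspace_scale[OF M F(1)]])
  next
    fix s x assume H: "(\<forall>n. s n \<in> ?c ` M) \<and> x \<in> l2 (UNIV \<times> I) \<and>
      (\<lambda>n. l2_norm (UNIV \<times> I) (\<lambda>p. s n p - x p)) \<longlonglongrightarrow> 0"
    hence "\<forall>n. \<exists>F. F \<in> M \<and> s n = ?c F" by blast
    then obtain F where F: "\<And>n. F n \<in> M" "\<And>n. s n = ?c (F n)" by metis
    have x: "x \<in> l2 (UNIV \<times> I)" using H by blast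
    note G = h2_series_in_H2[OF l2_seq_curry[OF x]]
    have "?c (\<lambda>z i. F n z i - h2_series (curry x) z i) = (\<lambda>p. s n p - x p)" for n
      using H2_diff(2)[OF MH[OF F(1)] G] F(2)[of n] c_series[OF x] by (auto simp: fun_eq_iff)
    hence "h2_norm I (\<lambda>z i. F n z i - h2_series (curry x) z i) = l2_norm (UNIV \<times> I) (\<lambda>p. s n p - x p)"
      for n using h2_norm_eq_l2_norm_case_prod[OF H2_diff(1)[OF MH[OF F(1)] G]] by simp
    hence "h2_series (curry x) \<in> M"
      using h2_closed_subspace_limit[where s=F, OF M F(1) G] H by simp
    thus "x \<in> ?c ` M" using c_series[OF x] by (metis image_eqI)
  qed
qed

lemma h2_orth_orth_subset: assumes M: "h2_closed_subspace I M" shows "h2_orth I (h2_orth I M) \<subseteq> M"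
proof
  fix G assume G: "G \<in> h2_orth I (h2_orth I M)"
  let ?c = "\<lambda>F. case_prod (h2_coeff F)"
  have MH: "M \<subseteq> H2 I" by (rule h2_closed_subspace_subset[OF M])
  have GH: "G \<in> H2 I" using G by (simp add: h2_orth_def)
  have "?c G \<in> l2_orth (UNIV \<times> I) (l2_orth (UNIV \<times> I) (?c ` M))"
    unfolding l2_orth_def[of _ "l2_orth _ _"]
  proof (intro CollectI conjI ballI)
    show "?c G \<in> l2 (UNIV \<times> I)" by (rule l2_case_prod[OF H2_h2_coeff(1)[OF GH]])
    fix y assume y: "y \<in> l2_orth (UNIV \<times> I) (?c ` M)"
    have y_l2: "y \<in> l2 (UNIV \<times> I)" using y by (simp add: l2_orth_def)
    define N where "N = h2_series (curry y)"
    have NH: "N \<in> H2 I" unfolding N_def by (rule h2_series_in_H2[OF l2_seq_curry[OF y_l2]])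
    have cN: "?c N = y" using h2_coeff_h2_series[OF l2_seq_curry[OF y_l2]] by (auto simp: N_def fun_eq_iff)
    have "N \<in> h2_orth I M"
      using y NH h2_inner_eq_l2_inner_case_prod[OF _ NH] MH cN by (auto simp: h2_orth_def l2_orth_def)
    hence "h2_inner I N G = 0" using G by (simp add: h2_orth_def)
    thus "l2_inner (UNIV \<times> I) y (?c G) = 0" using h2_inner_eq_l2_inner_case_prod[OF NH GH] cN by simp
  qed
  hence "?c G \<in> ?c ` M"
    using l2_orth_orth_subset[OF l2_closed_subspace_h2_coeff_image[OF M]] by blast
  then obtain F where F: "F \<in> M" "?c G = ?c F" by blast
  hence "h2_coeff G = h2_coeff F" by (metis curry_case_prod)
  hence "G = F" using H2_h2_coeff(2)[OF GH] H2_h2_coeff(2)[of F I] F(1) MH by auto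
  thus "G \<in> M" using F by simp
qed

section \<open>Multiplication by operator-valued linear polynomials\<close>

definition l2_restrict :: "'i set \<Rightarrow> ('i \<Rightarrow> complex) \<Rightarrow> 'i \<Rightarrow> complex" where
  "l2_restrict I w = (\<lambda>i. if i \<in> I then w i else 0)"

(* Operators are only specified on l2 I; restricting first makes them act on all of l2 UNIV. *)
definition ell2_lift :: "'i set \<Rightarrow> (('i \<Rightarrow> complex) \<Rightarrow> ('i \<Rightarrow> complex)) \<Rightarrow> 'i ell2 \<Rightarrow> 'i ell2" where
  "ell2_lift I T v = Abs_ell2 (T (l2_restrict I (Rep_ell2 v)))"

lemma l2_restrict_l2: "w \<in> l2 UNIV \<Longrightarrow> l2_restrict I w \<in> l2 I"
  unfolding l2_restrict_def
  by (rule l2_memI) (auto intro: summable_on_subset[OF l2_summable_sq subset_UNIV] summable_on_cong[THEN iffD1])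

lemma l2_restrict_norm: assumes "w \<in> l2 UNIV" shows "l2_norm I (l2_restrict I w) \<le> l2_norm UNIV w"
proof -
  have "infsum (\<lambda>i. (cmod (l2_restrict I w i))^2) I = infsum (\<lambda>i. (cmod (w i))^2) I"
    by (rule infsum_cong) (simp add: l2_restrict_def)
  also have "\<dots> \<le> infsum (\<lambda>i. (cmod (w i))^2) UNIV"
    using l2_summable_sq[OF assms] by (intro infsum_mono_neutral) (auto intro: summable_on_subset)
  finally show ?thesis unfolding l2_norm_def by simp
qed

lemma l2_restrict_id: "x \<in> l2 I \<Longrightarrow> l2_restrict I x = x"
  by (auto simp: l2_restrict_def fun_eq_iff l2_zero_outside)

lemma bounded_linear_ell2_lift:
  fixes T :: "('i \<Rightarrow> complex) \<Rightarrow> ('i \<Rightarrow> complex)"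
  assumes "l2_bounded I T" shows "bounded_linear (ell2_lift I T)"
proof -
  obtain C where T: "l2_linear I T" "0 \<le> C" "\<And>x. x \<in> l2 I \<Longrightarrow> l2_norm I (T x) \<le> C * l2_norm I x"
    using l2_boundedE[OF assms] by blast
  define R where "R v = l2_restrict I (Rep_ell2 v)" for v
  have R: "R v \<in> l2 I" for v unfolding R_def by (rule l2_restrict_l2) simp
  have TR: "T (R v) \<in> l2 I" for v by (rule l2_linear_l2[OF T(1) R])
  show ?thesis
  proof (rule bounded_linear_intro[where K=C])
    fix x y :: "'i ell2" and r :: real
    have "R (x + y) = (\<lambda>i. R x i + R y i)" by (auto simp: R_def l2_restrict_def)
    thus "ell2_lift I T (x + y) = ell2_lift I T x + ell2_lift I T y"
      unfolding ell2_lift_def R_def[symmetric] by (simp add: l2_linear_add[OF T(1) R R] Abs_ell2_add[OF TR TR])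
    have "R (r *\<^sub>R x) = (\<lambda>i. complex_of_real r * R x i)" by (auto simp: R_def l2_restrict_def)
    hence "T (R (r *\<^sub>R x)) = (\<lambda>i. complex_of_real r * T (R x) i)" by (simp add: l2_linear_scale[OF T(1) R])
    thus "ell2_lift I T (r *\<^sub>R x) = r *\<^sub>R ell2_lift I T x"
      unfolding ell2_lift_def R_def[symmetric]
      using Rep_ell2_Abs_ell2_l2[OF TR] Rep_ell2_Abs_ell2_l2[OF l2_scale[OF TR]] by (intro ell2_eqI) simp
    have "norm (ell2_lift I T x) \<le> C * l2_norm I (R x)"
      unfolding ell2_lift_def R_def[symmetric] using norm_Abs_ell2[OF TR] T(3)[OF R] by simp
    also have "\<dots> \<le> C * norm x"
      using l2_restrict_norm[of "Rep_ell2 x" I] T(2) by (intro mult_left_mono) (auto simp: R_def norm_ell2_def)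
    finally show "norm (ell2_lift I T x) \<le> norm x * C" by (simp add: mult.commute)
  qed
qed

(* The partial sums of a power series with l2-summable coefficients converge in norm, not only
   coordinatewise; this is what lets bounded operators pass through the series. *)
lemma h2_series_ell2_sums: assumes a: "l2_seq I a" and z: "z \<in> ball 0 1"
  shows "h2_series a z \<in> l2 I" "(\<lambda>n. Abs_ell2 (\<lambda>i. z^n * a n i)) sums Abs_ell2 (h2_series a z)"
proof -
  have c_l2: "(\<lambda>i. z^n * a n i) \<in> l2 I" for n by (rule l2_scale[OF l2_seqD(1)[OF a]])
  define B where "B = sqrt (\<Sum>n. (l2_norm I (a n))^2)"
  have "norm (Abs_ell2 (\<lambda>i. z^n * a n i)) = l2_norm I (a n) * norm z ^ n" for n
    using norm_Abs_ell2[OF c_l2[of n]] l2_norm_scale[of I "z^n" "a n"] by (simp add: norm_power)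
  also have "l2_norm I (a n) * norm z ^ n \<le> B * norm z ^ n" for n
    unfolding B_def by (intro mult_right_mono l2_seq_norm_le[OF a]) simp
  finally have bound: "norm (Abs_ell2 (\<lambda>i. z^n * a n i)) \<le> B * norm z ^ n" for n .
  have "summable (\<lambda>n. B * norm z ^ n)" using z by (intro summable_mult summable_geometric) simp
  hence "summable (\<lambda>n. norm (Abs_ell2 (\<lambda>i. z^n * a n i)))"
    by (rule summable_comparison_test') (use bound in simp)
  hence "summable (\<lambda>n. Abs_ell2 (\<lambda>i. z^n * a n i))" by (rule summable_norm_cancel)
  then obtain \<sigma> where sig: "(\<lambda>n. Abs_ell2 (\<lambda>i. z^n * a n i)) sums \<sigma>"
    by (auto simp: summable_def)
  have "(\<lambda>n. a n i * z^n) sums Rep_ell2 \<sigma> i" for i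
    using bounded_linear.sums[OF bounded_linear_Rep_ell2_apply sig, of i] Rep_ell2_Abs_ell2_l2[OF c_l2]
    by (simp add: mult.commute)
  hence rep: "Rep_ell2 \<sigma> = h2_series a z"
    by (intro ext sums_unique2[OF _ h2_series_sums[OF a z]])
  have "h2_series a z i = 0" if "i \<notin> I" for i
    using that z by (simp add: h2_series_def l2_zero_outside[OF l2_seqD(1)[OF a]])
  thus "h2_series a z \<in> l2 I"
    unfolding rep[symmetric] by (rule l2_UNIV_imp_l2[OF Rep_ell2_l2]) (simp add: rep)
  show "(\<lambda>n. Abs_ell2 (\<lambda>i. z^n * a n i)) sums Abs_ell2 (h2_series a z)"
    using sig by (simp add: rep[symmetric] Rep_ell2_inverse)
qed

lemma l2_bounded_h2_series_sums:
  assumes T: "l2_bounded I T" and a: "l2_seq I a" and z: "z \<in> ball 0 1"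
  shows "(\<lambda>n. T (a n) i * z^n) sums (T (h2_series a z) i)"
proof -
  have lT: "l2_linear I T" using T by (simp add: l2_bounded_def)
  note F = h2_series_ell2_sums[OF a z]
  have "ell2_lift I T (Abs_ell2 (\<lambda>i. z^n * a n i)) = Abs_ell2 (\<lambda>i. z^n * T (a n) i)" for n
    using Rep_ell2_Abs_ell2_l2[OF l2_scale[OF l2_seqD(1)[OF a]]] l2_scale[OF l2_seqD(1)[OF a]]
    by (simp add: ell2_lift_def l2_restrict_id l2_linear_scale[OF lT l2_seqD(1)[OF a]])
  moreover have "ell2_lift I T (Abs_ell2 (h2_series a z)) = Abs_ell2 (T (h2_series a z))"
    using F(1) by (simp add: ell2_lift_def Rep_ell2_Abs_ell2_l2 l2_restrict_id)
  ultimately have "(\<lambda>n. Abs_ell2 (\<lambda>i. z^n * T (a n) i)) sums Abs_ell2 (T (h2_series a z))"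
    using bounded_linear.sums[OF bounded_linear_ell2_lift[OF T] F(2)] by simp
  from bounded_linear.sums[OF bounded_linear_Rep_ell2_apply this, of i]
  show ?thesis
    using Rep_ell2_Abs_ell2_l2[OF l2_scale[OF l2_linear_l2[OF lT l2_seqD(1)[OF a]]]]
      Rep_ell2_Abs_ell2_l2[OF l2_linear_l2[OF lT F(1)]] by (simp add: mult.commute)
qed

definition seq_shift :: "(nat \<Rightarrow> 'i \<Rightarrow> complex) \<Rightarrow> nat \<Rightarrow> 'i \<Rightarrow> complex" where
  "seq_shift b n = (if n = 0 then (\<lambda>_. 0) else b (n - 1))"

lemma seq_shift_0 [simp]: "seq_shift b 0 = (\<lambda>_. 0)"
  and seq_shift_Suc [simp]: "seq_shift b (Suc n) = b n"
  by (simp_all add: seq_shift_def)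

lemma l2_seq_seq_shift: assumes b: "l2_seq I b" shows "l2_seq I (seq_shift b)"
proof -
  have "summable (\<lambda>n. (l2_norm I (seq_shift b (Suc n)))^2)" using l2_seqD(2)[OF b] by simp
  hence "summable (\<lambda>n. (l2_norm I (seq_shift b n))^2)" by (rule summable_Suc_iff[THEN iffD1])
  moreover have "seq_shift b n \<in> l2 I" for n using l2_seqD(1)[OF b] by (cases n) auto
  ultimately show ?thesis by (simp add: l2_seq_def)
qed

lemma l2_seq_apply: assumes T: "l2_bounded I T" and a: "l2_seq I a" shows "l2_seq I (\<lambda>n. T (a n))"
proof -
  obtain C where T: "l2_linear I T" "0 \<le> C" "\<And>x. x \<in> l2 I \<Longrightarrow> l2_norm I (T x) \<le> C * l2_norm I x"
    using l2_boundedE[OF T] by blast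
  have bound: "(l2_norm I (T (a n)))^2 \<le> C^2 * (l2_norm I (a n))^2" for n
    using power_mono[OF T(3)[OF l2_seqD(1)[OF a]] l2_norm_nonneg] by (simp add: power_mult_distrib)
  have "summable (\<lambda>n. C^2 * (l2_norm I (a n))^2)" by (intro summable_mult l2_seqD(2)[OF a])
  hence "summable (\<lambda>n. (l2_norm I (T (a n)))^2)"
    by (rule summable_comparison_test') (use bound in simp)
  thus ?thesis using l2_linear_l2[OF T(1) l2_seqD(1)[OF a]] by (simp add: l2_seq_def)
qed

definition h2_shift :: "(complex \<Rightarrow> 'i \<Rightarrow> complex) \<Rightarrow> complex \<Rightarrow> 'i \<Rightarrow> complex" where
  "h2_shift F = (\<lambda>z i. if z \<in> ball 0 1 then z * F z i else 0)"

lemma seq_shift_sums: assumes b: "l2_seq I b" and z: "z \<in> ball 0 1"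
  shows "(\<lambda>n. seq_shift b n i * z^n) sums (z * h2_series b z i)"
proof -
  have "(\<lambda>n. z * (b n i * z^n)) sums (z * h2_series b z i)" by (intro sums_mult h2_series_sums[OF b z])
  hence "(\<lambda>n. seq_shift b (Suc n) i * z^(Suc n)) sums (z * h2_series b z i)" by (simp add: algebra_simps)
  thus ?thesis using sums_Suc_iff[of "\<lambda>n. seq_shift b n i * z^n"] by simp
qed

lemma h2_series_seq_shift: assumes b: "l2_seq I b"
  shows "h2_series (seq_shift b) = h2_shift (h2_series b)"
proof (intro ext)
  fix z i
  show "h2_series (seq_shift b) z i = h2_shift (h2_series b) z i"
  proof (cases "z \<in> ball 0 1")
    case True
    thus ?thesis using h2_series_sums[OF l2_seq_seq_shift[OF b] True, of i] seq_shift_sums[OF b True, of i]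
      by (simp add: h2_shift_def sums_unique2)
  qed (simp add: h2_series_def h2_shift_def)
qed

(* Taylor coefficients of z \<mapsto> (A + z B) F(z) when F has coefficients a. *)
definition pencil_seq :: "(('i \<Rightarrow> complex) \<Rightarrow> ('i \<Rightarrow> complex)) \<Rightarrow> (('i \<Rightarrow> complex) \<Rightarrow> ('i \<Rightarrow> complex))
    \<Rightarrow> (nat \<Rightarrow> 'i \<Rightarrow> complex) \<Rightarrow> nat \<Rightarrow> 'i \<Rightarrow> complex" where
  "pencil_seq A B a n = (\<lambda>i. A (a n) i + seq_shift (\<lambda>m. B (a m)) n i)"

lemma l2_seq_pencil_seq: assumes "l2_bounded I A" "l2_bounded I B" "l2_seq I a"
  shows "l2_seq I (pencil_seq A B a)"
  unfolding pencil_seq_def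
  by (rule l2_seq_add[OF l2_seq_apply[OF assms(1,3)] l2_seq_seq_shift[OF l2_seq_apply[OF assms(2,3)]]])

lemma mult_op_h2_series:
  assumes A: "l2_bounded I A" and B: "l2_bounded I B" and a: "l2_seq I a"
    and \<phi>: "\<And>z x. z \<in> ball 0 1 \<Longrightarrow> x \<in> l2 I \<Longrightarrow> \<phi> z x = (\<lambda>i. A x i + z * B x i)"
  shows "mult_op \<phi> (h2_series a) = h2_series (pencil_seq A B a)"
proof (intro ext)
  fix z i
  show "mult_op \<phi> (h2_series a) z i = h2_series (pencil_seq A B a) z i"
  proof (cases "z \<in> ball 0 1")
    case z: True
    have "mult_op \<phi> (h2_series a) z i = A (h2_series a z) i + z * B (h2_series a z) i"
      using z \<phi>[OF z h2_series_ell2_sums(1)[OF a z]] by (simp add: mult_op_def)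
    moreover have "h2_series (\<lambda>m. B (a m)) z i = B (h2_series a z) i"
      using h2_series_sums[OF l2_seq_apply[OF B a] z] l2_bounded_h2_series_sums[OF B a z]
      by (rule sums_unique2)
    ultimately have "(\<lambda>n. pencil_seq A B a n i * z^n) sums mult_op \<phi> (h2_series a) z i"
      using sums_add[OF l2_bounded_h2_series_sums[OF A a z, of i] seq_shift_sums[OF l2_seq_apply[OF B a] z, of i]]
      by (simp add: pencil_seq_def distrib_right)
    thus ?thesis using h2_series_sums[OF l2_seq_pencil_seq[OF A B a] z] by (simp add: sums_unique2)
  qed (simp add: mult_op_def h2_series_def)
qed

definition seq_single :: "nat \<Rightarrow> ('i \<Rightarrow> complex) \<Rightarrow> nat \<Rightarrow> 'i \<Rightarrow> complex" where
  "seq_single n x = (\<lambda>m. if m = n then x else (\<lambda>_. 0))"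

lemma seq_single_same [simp]: "seq_single n x n = x"
  and seq_single_other [simp]: "m \<noteq> n \<Longrightarrow> seq_single n x m = (\<lambda>_. 0)"
  by (simp_all add: seq_single_def)

lemma seq_single_zero [simp]: "seq_single n (\<lambda>_. 0) = (\<lambda>m i. 0)"
  by (simp add: seq_single_def fun_eq_iff)

lemma seq_single_add: "(\<lambda>m i. seq_single n x m i + seq_single n y m i) = seq_single n (\<lambda>i. x i + y i)"
  and seq_single_scale: "(\<lambda>m i. c * seq_single n x m i) = seq_single n (\<lambda>i. c * x i)"
  and seq_single_diff: "(\<lambda>m i. seq_single n x m i - seq_single n y m i) = seq_single n (\<lambda>i. x i - y i)"
  by (simp_all add: seq_single_def fun_eq_iff)

lemma seq_shift_seq_single: "seq_shift (seq_single n x) = seq_single (Suc n) x"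
  by (auto simp: seq_shift_def seq_single_def fun_eq_iff)

lemma l2_seq_seq_single: assumes "x \<in> l2 I" shows "l2_seq I (seq_single n x)"
proof -
  have "(\<lambda>m. (l2_norm I (seq_single n x m))^2) = (\<lambda>m. if m = n then (l2_norm I x)^2 else 0)"
    by (auto simp: seq_single_def l2_norm_def)
  thus ?thesis using assms sums_single[where i=n and f="\<lambda>_. (l2_norm I x)^2"]
    by (auto simp: l2_seq_def seq_single_def sums_summable)
qed

lemma h2_inner_seq_single: assumes x: "x \<in> l2 I" and b: "l2_seq I b"
  shows "h2_inner I (h2_series (seq_single n x)) (h2_series b) = l2_inner I x (b n)"
proof -
  have "(\<lambda>m. l2_inner I (seq_single n x m) (b m)) = (\<lambda>m. if m = n then l2_inner I x (b n) else 0)"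
    by (auto simp: seq_single_def)
  thus ?thesis using sums_single[where i=n and f="\<lambda>_. l2_inner I x (b n)"]
    by (simp add: h2_inner_h2_series[OF l2_seq_seq_single[OF x] b] sums_iff)
qed

lemma h2_norm_seq_single: assumes x: "x \<in> l2 I"
  shows "h2_norm I (h2_series (seq_single n x)) = l2_norm I x"
proof -
  have "(\<lambda>m. (l2_norm I (seq_single n x m))^2) = (\<lambda>m. if m = n then (l2_norm I x)^2 else 0)"
    by (auto simp: seq_single_def l2_norm_def)
  thus ?thesis using sums_single[where i=n and f="\<lambda>_. (l2_norm I x)^2"] l2_norm_nonneg[of I x]
    by (simp add: h2_norm_h2_series[OF l2_seq_seq_single[OF x]] sums_iff)
qed

lemma pencil_seq_seq_single_0:
  "pencil_seq A B (seq_single 0 x) 0 = A x"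
  "l2_linear I A \<Longrightarrow> pencil_seq A B (seq_single 0 x) (Suc 0) = B x"
  by (simp_all add: pencil_seq_def l2_linear_zero)

section \<open>Subspaces of H2 determined by their Taylor coefficients\<close>

definition H2_coeffs_in :: "'i set \<Rightarrow> ('i \<Rightarrow> complex) set \<Rightarrow> (complex \<Rightarrow> 'i \<Rightarrow> complex) set" where
  "H2_coeffs_in I K = {F \<in> H2 I. \<forall>n. h2_coeff F n \<in> K}"

lemma h2_series_in_H2_coeffs_in_iff:
  "l2_seq I a \<Longrightarrow> h2_series a \<in> H2_coeffs_in I K \<longleftrightarrow> (\<forall>n. a n \<in> K)"
  by (simp add: H2_coeffs_in_def h2_series_in_H2 h2_coeff_h2_series)

lemma H2_coeffs_inE:
  assumes "F \<in> H2_coeffs_in I K"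
  obtains a where "l2_seq I a" "F = h2_series a" "\<And>n. a n \<in> K"
  using assms H2_h2_coeff[of F I] by (auto simp: H2_coeffs_in_def)

lemma h2_series_seq_single_in_H2_coeffs_in:
  assumes "x \<in> K" "K \<subseteq> l2 I" "(\<lambda>_. 0) \<in> K"
  shows "h2_series (seq_single n x) \<in> H2_coeffs_in I K"
proof -
  have "seq_single n x m \<in> K" for m using assms by (cases "m = n") simp_all
  thus ?thesis using assms by (simp add: h2_series_in_H2_coeffs_in_iff l2_seq_seq_single subsetD)
qed

lemma h2_closed_subspace_H2_coeffs_in:
  assumes K: "l2_closed_subspace I K" shows "h2_closed_subspace I (H2_coeffs_in I K)"
  unfolding h2_closed_subspace_def
proof (intro conjI ballI allI impI)
  show "H2_coeffs_in I K \<subseteq> H2 I" by (auto simp: H2_coeffs_in_def)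
  show "(\<lambda>_ _. 0) \<in> H2_coeffs_in I K"
    using h2_series_in_H2_coeffs_in_iff[OF l2_seq_zero, of I K] l2_closed_subspace_zero[OF K] by simp
next
  fix F G assume "F \<in> H2_coeffs_in I K" "G \<in> H2_coeffs_in I K"
  hence "F \<in> H2 I" "G \<in> H2 I" "\<And>n. h2_coeff F n \<in> K" "\<And>n. h2_coeff G n \<in> K"
    by (auto simp: H2_coeffs_in_def)
  thus "(\<lambda>z i. F z i + G z i) \<in> H2_coeffs_in I K"
    using H2_add[of F I G] l2_closed_subspace_add[OF K] by (simp add: H2_coeffs_in_def)
next
  fix c F assume "F \<in> H2_coeffs_in I K"
  hence "F \<in> H2 I" "\<And>n. h2_coeff F n \<in> K" by (auto simp: H2_coeffs_in_def)
  thus "(\<lambda>z i. c * F z i) \<in> H2_coeffs_in I K"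
    using H2_scale[of F I c] l2_closed_subspace_scale[OF K] by (simp add: H2_coeffs_in_def)
next
  fix s F assume "(\<forall>n. s n \<in> H2_coeffs_in I K) \<and> F \<in> H2 I \<and>
    (\<lambda>n. h2_norm I (\<lambda>z i. s n z i - F z i)) \<longlonglongrightarrow> 0"
  hence s: "\<And>n. s n \<in> H2 I" "\<And>n m. h2_coeff (s n) m \<in> K" and F: "F \<in> H2 I"
    and lim: "(\<lambda>n. h2_norm I (\<lambda>z i. s n z i - F z i)) \<longlonglongrightarrow> 0"
    by (auto simp: H2_coeffs_in_def)
  have "h2_coeff F m \<in> K" for m
  proof (rule l2_closed_subspace_limit[OF K s(2) l2_seqD(1)[OF H2_h2_coeff(1)[OF F]]])
    have "l2_norm I (\<lambda>i. h2_coeff (s n) m i - h2_coeff F m i) \<le> h2_norm I (\<lambda>z i. s n z i - F z i)" for n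
      using l2_norm_h2_coeff_le[OF H2_diff(1)[OF s(1)[of n] F], of m] H2_diff(2)[OF s(1)[of n] F] by simp
    thus "(\<lambda>n. l2_norm I (\<lambda>i. h2_coeff (s n) m i - h2_coeff F m i)) \<longlonglongrightarrow> 0"
      by (intro Lim_null_comparison[OF always_eventually lim]) (simp add: l2_norm_nonneg)
  qed
  thus "F \<in> H2_coeffs_in I K" using F by (simp add: H2_coeffs_in_def)
qed

lemma h2_orth_H2_coeffs_in:
  assumes K: "K \<subseteq> l2 I" "(\<lambda>_. 0) \<in> K"
  shows "h2_orth I (H2_coeffs_in I K) = H2_coeffs_in I (l2_orth I K)"
proof (intro equalityI subsetI)
  fix G assume G: "G \<in> h2_orth I (H2_coeffs_in I K)"
  note b = H2_h2_coeff[OF subsetD[OF h2_orth_subset G]]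
  have "h2_coeff G n \<in> l2_orth I K" for n
  proof -
    have "l2_inner I x (h2_coeff G n) = 0" if x: "x \<in> K" for x
    proof -
      have "h2_series (seq_single n x) \<in> H2_coeffs_in I K"
        using h2_series_seq_single_in_H2_coeffs_in[OF x K] .
      thus ?thesis using G h2_inner_seq_single[OF _ b(1), of x n] x K b(2) by (auto simp: h2_orth_def)
    qed
    thus ?thesis using l2_seqD(1)[OF b(1)] by (simp add: l2_orth_def)
  qed
  thus "G \<in> H2_coeffs_in I (l2_orth I K)" using G by (simp add: H2_coeffs_in_def h2_orth_def)
next
  fix G assume "G \<in> H2_coeffs_in I (l2_orth I K)"
  then obtain b where b: "l2_seq I b" "G = h2_series b" "\<And>n. b n \<in> l2_orth I K"
    by (blast elim: H2_coeffs_inE)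
  have "h2_inner I F G = 0" if "F \<in> H2_coeffs_in I K" for F
  proof -
    obtain a where a: "l2_seq I a" "F = h2_series a" "\<And>n. a n \<in> K"
      using \<open>F \<in> H2_coeffs_in I K\<close> by (blast elim: H2_coeffs_inE)
    have "l2_inner I (a n) (b n) = 0" for n using a(3) b(3) by (simp add: l2_orth_def)
    thus ?thesis using h2_inner_h2_series[OF a(1) b(1)] a(2) b(2) by simp
  qed
  thus "G \<in> h2_orth I (H2_coeffs_in I K)" using h2_series_in_H2[OF b(1)] b(2) by (simp add: h2_orth_def)
qed

lemma H2_coeffs_in_eq_zero_iff:
  assumes "K \<subseteq> l2 I" "(\<lambda>_. 0) \<in> K"
  shows "H2_coeffs_in I K = {\<lambda>_ _. 0} \<longleftrightarrow> K = {\<lambda>_. 0}"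
proof
  assume M: "H2_coeffs_in I K = {\<lambda>_ _. 0}"
  have "x = (\<lambda>_. 0)" if x: "x \<in> K" for x
  proof -
    have x_l2: "x \<in> l2 I" using x assms(1) by blast
    have "h2_series (seq_single 0 x) \<in> H2_coeffs_in I K"
      using h2_series_seq_single_in_H2_coeffs_in[OF x assms] .
    hence "h2_coeff (h2_series (seq_single 0 x)) 0 = h2_coeff (\<lambda>_ _. 0) 0" using M by simp
    thus ?thesis using h2_coeff_h2_series[OF l2_seq_seq_single[OF x_l2]]
      h2_coeff_h2_series[OF l2_seq_zero] by simp
  qed
  thus "K = {\<lambda>_. 0}" using assms(2) by blast
next
  assume K0: "K = {\<lambda>_. 0}"
  have "F = (\<lambda>_ _. 0)" if "F \<in> H2_coeffs_in I K" for F
  proof -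
    obtain a where a: "l2_seq I a" "F = h2_series a" "\<And>n. a n \<in> K"
      using \<open>F \<in> H2_coeffs_in I K\<close> by (blast elim: H2_coeffs_inE)
    have "a = (\<lambda>n i. 0)" using a(3) K0 by (auto simp: fun_eq_iff)
    thus ?thesis using a(2) by simp
  qed
  moreover have "(\<lambda>_ _. 0) \<in> H2_coeffs_in I K"
    using h2_series_seq_single_in_H2_coeffs_in[OF assms(2) assms, of 0] by simp
  ultimately show "H2_coeffs_in I K = {\<lambda>_ _. 0}" by blast
qed

lemma H2_coeffs_in_eq_H2_iff:
  assumes "K \<subseteq> l2 I" shows "H2_coeffs_in I K = H2 I \<longleftrightarrow> K = l2 I"
proof
  assume M: "H2_coeffs_in I K = H2 I"
  have "x \<in> K" if x: "x \<in> l2 I" for x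
  proof -
    have "h2_series (seq_single 0 x) \<in> H2_coeffs_in I K"
      using h2_series_in_H2[OF l2_seq_seq_single[OF x]] M by simp
    thus ?thesis using h2_series_in_H2_coeffs_in_iff[OF l2_seq_seq_single[OF x]] by (metis seq_single_same)
  qed
  thus "K = l2 I" using assms by blast
qed (auto simp: H2_coeffs_in_def H2_h2_coeff l2_seqD)

lemma H2_coeffs_in_nontrivial_iff:
  assumes "l2_closed_subspace I K"
  shows "H2_coeffs_in I K \<noteq> {\<lambda>_ _. 0} \<and> H2_coeffs_in I K \<noteq> H2 I \<longleftrightarrow> K \<noteq> {\<lambda>_. 0} \<and> K \<noteq> l2 I"
  using H2_coeffs_in_eq_zero_iff H2_coeffs_in_eq_H2_iff
    l2_closed_subspace_subset[OF assms] l2_closed_subspace_zero[OF assms] by blast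

lemma pencil_coeffs_mem:
  assumes A: "l2_bounded I A" and B: "l2_bounded I B"
    and \<phi>: "\<And>z x. z \<in> ball 0 1 \<Longrightarrow> x \<in> l2 I \<Longrightarrow> \<phi> z x = (\<lambda>i. A x i + z * B x i)"
    and K: "l2_closed_subspace I K" and inv: "mult_op \<phi> ` H2_coeffs_in I K \<subseteq> H2_coeffs_in I K"
    and x: "x \<in> K"
  shows "A x \<in> K" "B x \<in> K"
proof -
  have x_l2: "x \<in> l2 I" using x l2_closed_subspace_subset[OF K] by blast
  have "h2_series (seq_single 0 x) \<in> H2_coeffs_in I K"
    by (rule h2_series_seq_single_in_H2_coeffs_in[OF x l2_closed_subspace_subset[OF K]
          l2_closed_subspace_zero[OF K]])
  hence "h2_series (pencil_seq A B (seq_single 0 x)) \<in> H2_coeffs_in I K"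
    using inv mult_op_h2_series[OF A B l2_seq_seq_single[OF x_l2] \<phi>] by auto
  hence coeff: "pencil_seq A B (seq_single 0 x) n \<in> K" for n
    using h2_series_in_H2_coeffs_in_iff[OF l2_seq_pencil_seq[OF A B l2_seq_seq_single[OF x_l2]]] by blast
  have "l2_linear I A" using A by (simp add: l2_bounded_def)
  from coeff[of 0] coeff[of "Suc 0"] show "A x \<in> K" "B x \<in> K"
    using pencil_seq_seq_single_0(2)[OF \<open>l2_linear I A\<close>] by (simp_all add: pencil_seq_def)
qed

lemma mult_op_pencil_invariant:
  assumes A: "l2_bounded I A" and B: "l2_bounded I B"
    and \<phi>: "\<And>z x. z \<in> ball 0 1 \<Longrightarrow> x \<in> l2 I \<Longrightarrow> \<phi> z x = (\<lambda>i. A x i + z * B x i)"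
    and K: "l2_closed_subspace I K" and "\<And>x. x \<in> K \<Longrightarrow> A x \<in> K" "\<And>x. x \<in> K \<Longrightarrow> B x \<in> K"
  shows "mult_op \<phi> ` H2_coeffs_in I K \<subseteq> H2_coeffs_in I K"
proof (rule image_subsetI)
  fix F assume "F \<in> H2_coeffs_in I K"
  then obtain a where a: "l2_seq I a" "F = h2_series a" "\<And>n. a n \<in> K"
    by (metis H2_coeffs_inE)
  have "pencil_seq A B a n \<in> K" for n
    using assms(5,6) a(3) l2_closed_subspace_add[OF K] l2_closed_subspace_zero[OF K]
    by (cases n) (simp_all add: pencil_seq_def)
  thus "mult_op \<phi> F \<in> H2_coeffs_in I K"
    using mult_op_h2_series[OF A B a(1) \<phi>] a(2)
      h2_series_in_H2_coeffs_in_iff[OF l2_seq_pencil_seq[OF A B a(1)]] by simp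
qed

section \<open>Subspaces reducing the shift\<close>

lemma l2_seq_Suc: "l2_seq I a \<Longrightarrow> l2_seq I (\<lambda>n. a (Suc n))"
  using summable_Suc_iff[of "\<lambda>n. (l2_norm I (a n))^2"] by (simp add: l2_seq_def)

lemma h2_series_seq_single_mem:
  assumes "h2_shift ` M \<subseteq> M" "x \<in> l2 I" "h2_series (seq_single 0 x) \<in> M"
  shows "h2_series (seq_single n x) \<in> M"
proof (induction n)
  case (Suc n)
  thus ?case using assms(1) h2_series_seq_shift[OF l2_seq_seq_single[OF assms(2)], of n]
    by (auto simp: seq_shift_seq_single)
qed (use assms in simp)

(* The backward shift is the adjoint of the shift, so it preserves M once the shift preserves
   the orthogonal complement of M. *)
lemma h2_backward_shift_mem:
  assumes M: "h2_closed_subspace I M" and Mo: "h2_shift ` h2_orth I M \<subseteq> h2_orth I M"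
    and a: "l2_seq I a" "h2_series a \<in> M"
  shows "h2_series (\<lambda>n. a (Suc n)) \<in> M"
proof (rule subsetD[OF h2_orth_orth_subset[OF M]])
  have a': "l2_seq I (\<lambda>n. a (Suc n))" by (rule l2_seq_Suc[OF a(1)])
  have "h2_inner I N (h2_series (\<lambda>n. a (Suc n))) = 0" if N: "N \<in> h2_orth I M" for N
  proof -
    obtain b where b: "l2_seq I b" "N = h2_series b"
      using H2_imp_h2_series subsetD[OF h2_orth_subset N] by metis
    have "h2_series (seq_shift b) \<in> h2_orth I M"
      using Mo N b h2_series_seq_shift[OF b(1)] by auto
    hence "0 = (\<Sum>n. l2_inner I (a n) (seq_shift b n))"
      using a(2) h2_inner_h2_series[OF a(1) l2_seq_seq_shift[OF b(1)]] by (simp add: h2_orth_def)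
    also have "\<dots> = (\<Sum>n. l2_inner I (a (Suc n)) (b n))"
      using suminf_split_head[OF summable_l2_inner_seq[OF a(1) l2_seq_seq_shift[OF b(1)]]] by simp
    also have "\<dots> = h2_inner I (h2_series (\<lambda>n. a (Suc n))) N"
      using h2_inner_h2_series[OF a' b(1)] b(2) by simp
    finally show ?thesis
      using h2_inner_eq_0_commute h2_series_in_H2[OF a'] h2_series_in_H2[OF b(1)] b(2) by metis
  qed
  thus "h2_series (\<lambda>n. a (Suc n)) \<in> h2_orth I (h2_orth I M)"
    using h2_series_in_H2[OF a'] by (simp add: h2_orth_def)
qed

(* The constant term of F is F - z (backward shift of F); induct along the backward shift. *)
lemma h2_series_seq_single_coeff_mem:
  assumes M: "h2_closed_subspace I M" and "h2_shift ` M \<subseteq> M" "h2_shift ` h2_orth I M \<subseteq> h2_orth I M"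
    and "l2_seq I a" "h2_series a \<in> M"
  shows "h2_series (seq_single 0 (a n)) \<in> M"
  using assms(4,5)
proof (induction n arbitrary: a)
  case 0
  have a': "l2_seq I (\<lambda>n. a (Suc n))" by (rule l2_seq_Suc[OF 0(1)])
  have "h2_shift (h2_series (\<lambda>n. a (Suc n))) \<in> M"
    using assms(2) h2_backward_shift_mem[OF M assms(3) 0] by blast
  hence "(\<lambda>z i. h2_series a z i - h2_series (seq_shift (\<lambda>n. a (Suc n))) z i) \<in> M"
    using h2_closed_subspace_diff[OF M 0(2)] h2_series_seq_shift[OF a'] by simp
  moreover have "(\<lambda>n i. a n i - seq_shift (\<lambda>n. a (Suc n)) n i) = seq_single 0 (a 0)"
    by (auto simp: fun_eq_iff seq_single_def seq_shift_def)
  ultimately show ?case using h2_series_diff[OF 0(1) l2_seq_seq_shift[OF a']] by simp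
next
  case (Suc n)
  have "l2_seq I (\<lambda>m. a (Suc m))" "h2_series (\<lambda>m. a (Suc m)) \<in> M"
    using l2_seq_Suc[OF Suc.prems(1)] h2_backward_shift_mem[OF M assms(3) Suc.prems] .
  from Suc.IH[OF this] show ?case by simp
qed

lemma l2_closed_subspace_h2_constants:
  assumes M: "h2_closed_subspace I M"
  shows "l2_closed_subspace I {x \<in> l2 I. h2_series (seq_single 0 x) \<in> M}" (is "l2_closed_subspace I ?K")
  unfolding l2_closed_subspace_def
proof (intro conjI ballI allI impI)
  show "(\<lambda>_. 0) \<in> ?K"
    using h2_closed_subspace_zero[OF M] by simp
next
  fix x y assume "x \<in> ?K" "y \<in> ?K"
  hence x: "x \<in> l2 I" "h2_series (seq_single 0 x) \<in> M"
    and y: "y \<in> l2 I" "h2_series (seq_single 0 y) \<in> M"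
    by auto
  thus "(\<lambda>i. x i + y i) \<in> ?K"
    using h2_series_add[OF l2_seq_seq_single[OF x(1)] l2_seq_seq_single[OF y(1)], of 0 0]
      h2_closed_subspace_add[OF M x(2) y(2)] l2_add[OF x(1) y(1)] by (simp add: seq_single_add)
next
  fix c x assume "x \<in> ?K"
  hence x: "x \<in> l2 I" "h2_series (seq_single 0 x) \<in> M" by auto
  thus "(\<lambda>i. c * x i) \<in> ?K"
    using h2_series_scale[OF l2_seq_seq_single[OF x(1)], of c 0]
      h2_closed_subspace_scale[OF M x(2)] l2_scale[OF x(1)] by (simp add: seq_single_scale)
next
  fix s x assume H: "(\<forall>n. s n \<in> ?K) \<and> x \<in> l2 I \<and>
    (\<lambda>n. l2_norm I (\<lambda>i. s n i - x i)) \<longlonglongrightarrow> 0"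
  hence s: "\<And>n. s n \<in> l2 I" "\<And>n. h2_series (seq_single 0 (s n)) \<in> M" and x: "x \<in> l2 I" by auto
  have "h2_norm I (\<lambda>z i. h2_series (seq_single 0 (s n)) z i - h2_series (seq_single 0 x) z i)
      = l2_norm I (\<lambda>i. s n i - x i)" for n
    using h2_series_diff[OF l2_seq_seq_single[OF s(1)[of n]] l2_seq_seq_single[OF x], of 0 0]
      h2_norm_seq_single[OF l2_diff[OF s(1)[of n] x], of 0] by (simp add: seq_single_diff)
  hence "h2_series (seq_single 0 x) \<in> M"
    using h2_closed_subspace_limit[where s="\<lambda>n. h2_series (seq_single 0 (s n))"
        and F="h2_series (seq_single 0 x)", OF M s(2) h2_series_in_H2[OF l2_seq_seq_single[OF x]]] H
    by simp
  thus "x \<in> ?K" using x by simp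
qed auto

theorem h2_shift_reducing_eq_H2_coeffs_in:
  assumes M: "h2_closed_subspace I M" and S: "h2_shift ` M \<subseteq> M"
    and So: "h2_shift ` h2_orth I M \<subseteq> h2_orth I M"
  shows "\<exists>K. l2_closed_subspace I K \<and> M = H2_coeffs_in I K"
proof (intro exI conjI)
  define K where "K = {x \<in> l2 I. h2_series (seq_single 0 x) \<in> M}"
  show K: "l2_closed_subspace I K" unfolding K_def by (rule l2_closed_subspace_h2_constants[OF M])
  have K_l2: "K \<subseteq> l2 I" and K0: "(\<lambda>_. 0) \<in> K"
    using l2_closed_subspace_subset[OF K] l2_closed_subspace_zero[OF K] .
  have "M \<subseteq> H2_coeffs_in I K"
  proof
    fix F assume F: "F \<in> M"
    note a = H2_h2_coeff[OF subsetD[OF h2_closed_subspace_subset[OF M] F]]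
    show "F \<in> H2_coeffs_in I K"
      using h2_series_seq_single_coeff_mem[OF M S So a(1)] F a l2_seqD(1)[OF a(1)]
        h2_closed_subspace_subset[OF M] by (auto simp: H2_coeffs_in_def K_def)
  qed
  moreover have "H2_coeffs_in I K \<subseteq> h2_orth I (h2_orth I M)"
  proof
    fix F assume F: "F \<in> H2_coeffs_in I K"
    have "h2_orth I M \<subseteq> H2_coeffs_in I (l2_orth I K)"
    proof
      fix G assume G: "G \<in> h2_orth I M"
      note b = H2_h2_coeff[OF subsetD[OF h2_orth_subset G]]
      have "l2_inner I x (h2_coeff G n) = 0" if "x \<in> K" for x n
        using G h2_series_seq_single_mem[OF S, where x=x and n=n] that h2_inner_seq_single[OF _ b(1), of x n] b(2)
        by (auto simp: K_def h2_orth_def)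
      thus "G \<in> H2_coeffs_in I (l2_orth I K)"
        using G l2_seqD(1)[OF b(1)] by (simp add: H2_coeffs_in_def h2_orth_def l2_orth_def)
    qed
    hence "h2_inner I F G = 0" if "G \<in> h2_orth I M" for G
      using that F h2_orth_H2_coeffs_in[OF K_l2 K0] by (auto simp: h2_orth_def)
    thus "F \<in> h2_orth I (h2_orth I M)"
      using F h2_inner_eq_0_commute[of F I] h2_orth_subset
      by (auto simp: h2_orth_def H2_coeffs_in_def)
  qed
  ultimately show "M = H2_coeffs_in I K" using h2_orth_orth_subset[OF M] by blast
qed

section \<open>The pencils phi1 and phi2\<close>

context
  fixes I :: "'i set" and P U :: "('i \<Rightarrow> complex) \<Rightarrow> ('i \<Rightarrow> complex)"
  assumes P: "orth_proj I P" and U: "unitary_op I U"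
begin

lemma phi1_eq: assumes x: "x \<in> l2 I"
  shows "phi1 I P U z x = (\<lambda>i. l2_adj I U (\<lambda>i. x i - P x i) i + z * l2_adj I U (P x) i)"
proof -
  have Px: "P x \<in> l2 I" by (rule l2_linear_l2[OF orth_proj_linear[OF P] x])
  show ?thesis
    unfolding phi1_def
    using l2_linear_add[OF l2_linear_l2_adj[OF U] l2_diff[OF x Px] l2_scale[OF Px]]
      l2_linear_scale[OF l2_linear_l2_adj[OF U] Px] by simp
qed

lemma phi2_eq: "phi2 I P U z x = (\<lambda>i. P (U x) i + z * (U x i - P (U x) i))"
  by (simp add: phi2_def)

lemma l2_bounded_phi_coeffs:
  "l2_bounded I (\<lambda>x. l2_adj I U (\<lambda>i. x i - P x i))" "l2_bounded I (\<lambda>x. l2_adj I U (P x))"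
  "l2_bounded I (\<lambda>x. P (U x))" "l2_bounded I (\<lambda>x i. U x i - P (U x) i)"
  using l2_bounded_comp[OF l2_bounded_l2_adj[OF U] l2_bounded_diff[OF l2_bounded_id l2_bounded_orth_proj[OF P]]]
    l2_bounded_comp[OF l2_bounded_l2_adj[OF U] l2_bounded_orth_proj[OF P]]
    l2_bounded_comp[OF l2_bounded_orth_proj[OF P] l2_bounded_unitary_op[OF U]]
    l2_bounded_diff[OF l2_bounded_unitary_op[OF U] l2_bounded_comp[OF l2_bounded_orth_proj[OF P] l2_bounded_unitary_op[OF U]]]
  by simp_all

lemma phi2_phi1: assumes x: "x \<in> l2 I" shows "phi2 I P U z (phi1 I P U z x) = (\<lambda>i. z * x i)"
proof -
  have lP: "l2_linear I P" by (rule orth_proj_linear[OF P])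
  have Px: "P x \<in> l2 I" by (rule l2_linear_l2[OF lP x])
  define w where "w = (\<lambda>i. (x i - P x i) + z * P x i)"
  have w_l2: "w \<in> l2 I" unfolding w_def by (intro l2_add l2_diff l2_scale x Px)
  have "P w = (\<lambda>i. z * P x i)"
    unfolding w_def
    using l2_linear_add[OF lP l2_diff[OF x Px] l2_scale[OF Px]] l2_linear_diff[OF lP x Px]
      l2_linear_scale[OF lP Px] orth_proj_idem[OF P x] by simp
  moreover have "U (phi1 I P U z x) = w" unfolding phi1_def w_def[symmetric] by (rule unitary_op_l2_adj[OF U w_l2])
  ultimately show ?thesis by (simp add: phi2_def w_def algebra_simps)
qed

lemma mult_op_phi2_phi1: assumes "F \<in> H2 I"
  shows "mult_op (phi2 I P U) (mult_op (phi1 I P U) F) = h2_shift F"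
proof -
  have "F z \<in> l2 I" if "z \<in> ball 0 1" for z
    using h2_series_ell2_sums(1)[OF H2_h2_coeff(1)[OF assms] that] H2_h2_coeff(2)[OF assms] by simp
  thus ?thesis by (auto simp: mult_op_def h2_shift_def phi2_phi1 fun_eq_iff)
qed

lemma H2_coeffs_in_mult_op_phi_invariant_iff:
  assumes K: "l2_closed_subspace I K"
  shows "mult_op (phi1 I P U) ` H2_coeffs_in I K \<subseteq> H2_coeffs_in I K \<and>
      mult_op (phi2 I P U) ` H2_coeffs_in I K \<subseteq> H2_coeffs_in I K
    \<longleftrightarrow> P ` K \<subseteq> K \<and> U ` K \<subseteq> K \<and> l2_adj I U ` K \<subseteq> K"
proof
  note K_l2 = l2_closed_subspace_subset[OF K]
  have lP: "l2_linear I P" and lV: "l2_linear I (l2_adj I U)"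
    by (rule orth_proj_linear[OF P], rule l2_linear_l2_adj[OF U])
  assume "mult_op (phi1 I P U) ` H2_coeffs_in I K \<subseteq> H2_coeffs_in I K \<and>
      mult_op (phi2 I P U) ` H2_coeffs_in I K \<subseteq> H2_coeffs_in I K"
  hence phi1: "l2_adj I U (\<lambda>i. x i - P x i) \<in> K" "l2_adj I U (P x) \<in> K"
    and phi2: "P (U x) \<in> K" "(\<lambda>i. U x i - P (U x) i) \<in> K" if "x \<in> K" for x
    using pencil_coeffs_mem[OF l2_bounded_phi_coeffs(1,2) phi1_eq K _ that]
      pencil_coeffs_mem[OF l2_bounded_phi_coeffs(3,4) phi2_eq K _ that] by auto
  have U_inv: "U x \<in> K" if x: "x \<in> K" for x
    using l2_closed_subspace_add[OF K phi2[OF x]] by simp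
  show "P ` K \<subseteq> K \<and> U ` K \<subseteq> K \<and> l2_adj I U ` K \<subseteq> K"
  proof (intro conjI image_subsetI U_inv)
    fix x assume x: "x \<in> K"
    note x_l2 = subsetD[OF K_l2 x]
    note Px_l2 = l2_linear_l2[OF lP x_l2]
    show "l2_adj I U x \<in> K"
      using l2_closed_subspace_add[OF K phi1[OF x]] l2_linear_add[OF lV l2_diff[OF x_l2 Px_l2] Px_l2]
      by simp
    have "(\<lambda>i. x i - P x i) \<in> K"
      using U_inv[OF phi1(1)[OF x]] unitary_op_l2_adj[OF U l2_diff[OF x_l2 Px_l2]] by simp
    from l2_closed_subspace_diff[OF K x this] show "P x \<in> K" by simp
  qed
next
  assume "P ` K \<subseteq> K \<and> U ` K \<subseteq> K \<and> l2_adj I U ` K \<subseteq> K"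
  hence inv: "\<And>x. x \<in> K \<Longrightarrow> P x \<in> K" "\<And>x. x \<in> K \<Longrightarrow> U x \<in> K"
    "\<And>x. x \<in> K \<Longrightarrow> l2_adj I U x \<in> K"
    by auto
  have diff: "(\<lambda>i. x i - P x i) \<in> K" "(\<lambda>i. U x i - P (U x) i) \<in> K" if "x \<in> K" for x
    using l2_closed_subspace_diff[OF K] inv that by simp_all
  show "mult_op (phi1 I P U) ` H2_coeffs_in I K \<subseteq> H2_coeffs_in I K \<and>
      mult_op (phi2 I P U) ` H2_coeffs_in I K \<subseteq> H2_coeffs_in I K"
    by (intro conjI mult_op_pencil_invariant[OF l2_bounded_phi_coeffs(1,2) phi1_eq K]
        mult_op_pencil_invariant[OF l2_bounded_phi_coeffs(3,4) phi2_eq K]) (simp_all add: inv diff)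
qed

lemma l2_orth_invariant_P_U_adj:
  assumes "K \<subseteq> l2 I" "P ` K \<subseteq> K" "U ` K \<subseteq> K" "l2_adj I U ` K \<subseteq> K"
  shows "P ` l2_orth I K \<subseteq> l2_orth I K" "U ` l2_orth I K \<subseteq> l2_orth I K"
    "l2_adj I U ` l2_orth I K \<subseteq> l2_orth I K"
  using l2_orth_invariant[OF assms(1) l2_linear_l2[OF orth_proj_linear[OF P]] orth_proj_adjoint[OF P] assms(2)]
    l2_orth_invariant[OF assms(1) l2_linear_l2[OF unitary_op_linear[OF U]] l2_inner_l2_adj_left[OF U] assms(4)]
    l2_orth_invariant[OF assms(1) l2_adj_l2[OF U] l2_inner_l2_adj_right[OF U] assms(3)]
  by blast+

lemma l2_reducing_iff_invariant:
  assumes K: "l2_closed_subspace I K"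
  shows "l2_reducing I K P \<and> l2_reducing I K U \<longleftrightarrow> P ` K \<subseteq> K \<and> U ` K \<subseteq> K \<and> l2_adj I U ` K \<subseteq> K"
proof
  assume "l2_reducing I K P \<and> l2_reducing I K U"
  hence "P ` K \<subseteq> K" "U ` K \<subseteq> K" "U ` l2_orth I K \<subseteq> l2_orth I K" by (auto simp: l2_reducing_def)
  moreover have "l2_adj I U ` K \<subseteq> K"
    using l2_orth_invariant[OF l2_orth_subset l2_adj_l2[OF U] l2_inner_l2_adj_right[OF U] calculation(3)]
    by (simp add: l2_orth_orth[OF K])
  ultimately show "P ` K \<subseteq> K \<and> U ` K \<subseteq> K \<and> l2_adj I U ` K \<subseteq> K" by blast
next
  assume "P ` K \<subseteq> K \<and> U ` K \<subseteq> K \<and> l2_adj I U ` K \<subseteq> K"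
  thus "l2_reducing I K P \<and> l2_reducing I K U"
    using l2_orth_invariant_P_U_adj[OF l2_closed_subspace_subset[OF K]] K by (simp add: l2_reducing_def)
qed

lemma h2_reducing_H2_coeffs_in_iff:
  assumes K: "l2_closed_subspace I K"
  shows "h2_reducing I (H2_coeffs_in I K) (mult_op (phi1 I P U)) \<and>
      h2_reducing I (H2_coeffs_in I K) (mult_op (phi2 I P U))
    \<longleftrightarrow> l2_reducing I K P \<and> l2_reducing I K U"
proof -
  note K_l2 = l2_closed_subspace_subset[OF K]
  have Ko: "l2_closed_subspace I (l2_orth I K)" by (rule l2_closed_subspace_orth[OF K_l2])
  have orth: "h2_orth I (H2_coeffs_in I K) = H2_coeffs_in I (l2_orth I K)"
    by (rule h2_orth_H2_coeffs_in[OF K_l2 l2_closed_subspace_zero[OF K]])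
  have "h2_reducing I (H2_coeffs_in I K) (mult_op (phi1 I P U)) \<and>
      h2_reducing I (H2_coeffs_in I K) (mult_op (phi2 I P U))
    \<longleftrightarrow> (mult_op (phi1 I P U) ` H2_coeffs_in I K \<subseteq> H2_coeffs_in I K \<and>
        mult_op (phi2 I P U) ` H2_coeffs_in I K \<subseteq> H2_coeffs_in I K) \<and>
      (mult_op (phi1 I P U) ` H2_coeffs_in I (l2_orth I K) \<subseteq> H2_coeffs_in I (l2_orth I K) \<and>
        mult_op (phi2 I P U) ` H2_coeffs_in I (l2_orth I K) \<subseteq> H2_coeffs_in I (l2_orth I K))"
    unfolding h2_reducing_def orth using h2_closed_subspace_H2_coeffs_in[OF K] by blast
  also have "\<dots> \<longleftrightarrow> (P ` K \<subseteq> K \<and> U ` K \<subseteq> K \<and> l2_adj I U ` K \<subseteq> K) \<and>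
      (P ` l2_orth I K \<subseteq> l2_orth I K \<and> U ` l2_orth I K \<subseteq> l2_orth I K \<and>
        l2_adj I U ` l2_orth I K \<subseteq> l2_orth I K)"
    by (simp only: H2_coeffs_in_mult_op_phi_invariant_iff[OF K]
        H2_coeffs_in_mult_op_phi_invariant_iff[OF Ko])
  also have "\<dots> \<longleftrightarrow> P ` K \<subseteq> K \<and> U ` K \<subseteq> K \<and> l2_adj I U ` K \<subseteq> K"
    using l2_orth_invariant_P_U_adj[OF K_l2] by (intro iffI) (elim conjE, simp)+
  finally show ?thesis by (simp only: l2_reducing_iff_invariant[OF K])
qed

lemma joint_reducing_eq_H2_coeffs_in:
  assumes "h2_reducing I M (mult_op (phi1 I P U))" "h2_reducing I M (mult_op (phi2 I P U))"
  shows "\<exists>K. l2_closed_subspace I K \<and> M = H2_coeffs_in I K"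
proof (rule h2_shift_reducing_eq_H2_coeffs_in)
  show M: "h2_closed_subspace I M" using assms(1) by (simp add: h2_reducing_def)
  have shift_inv: "h2_shift ` N \<subseteq> N"
    if "N \<subseteq> H2 I" "mult_op (phi1 I P U) ` N \<subseteq> N" "mult_op (phi2 I P U) ` N \<subseteq> N" for N
  proof (rule image_subsetI)
    fix F assume F: "F \<in> N"
    hence "mult_op (phi2 I P U) (mult_op (phi1 I P U) F) \<in> N" using that(2,3) by blast
    thus "h2_shift F \<in> N" using mult_op_phi2_phi1 subsetD[OF that(1) F] by simp
  qed
  show "h2_shift ` M \<subseteq> M"
    using assms by (intro shift_inv h2_closed_subspace_subset[OF M]) (simp_all add: h2_reducing_def)
  show "h2_shift ` h2_orth I M \<subseteq> h2_orth I M"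
    using assms by (intro shift_inv h2_orth_subset) (simp_all add: h2_reducing_def)
qed

end

theorem lemma3p8:
  fixes I :: "'i set"
    and P U :: "('i \<Rightarrow> complex) \<Rightarrow> ('i \<Rightarrow> complex)"
  assumes "orth_proj I P"
    and "unitary_op I U"
  shows "(\<exists>M. h2_reducing I M (mult_op (phi1 I P U)) \<and> h2_reducing I M (mult_op (phi2 I P U))
            \<and> M \<noteq> {\<lambda>_ _. 0} \<and> M \<noteq> H2 I)
     \<longleftrightarrow> (\<exists>K. l2_reducing I K P \<and> l2_reducing I K U \<and> K \<noteq> {\<lambda>_. 0} \<and> K \<noteq> l2 I)"
proof (intro iffI; elim exE conjE)
  fix M assume M: "h2_reducing I M (mult_op (phi1 I P U))" "h2_reducing I M (mult_op (phi2 I P U))"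
    "M \<noteq> {\<lambda>_ _. 0}" "M \<noteq> H2 I"
  then obtain K where K: "l2_closed_subspace I K" "M = H2_coeffs_in I K"
    using joint_reducing_eq_H2_coeffs_in[OF assms] by blast
  with M show "\<exists>K. l2_reducing I K P \<and> l2_reducing I K U \<and> K \<noteq> {\<lambda>_. 0} \<and> K \<noteq> l2 I"
    using h2_reducing_H2_coeffs_in_iff[OF assms K(1)] H2_coeffs_in_nontrivial_iff[OF K(1)] by auto
next
  fix K assume K: "l2_reducing I K P" "l2_reducing I K U" "K \<noteq> {\<lambda>_. 0}" "K \<noteq> l2 I"
  hence closed: "l2_closed_subspace I K" by (simp add: l2_reducing_def)
  show "\<exists>M. h2_reducing I M (mult_op (phi1 I P U)) \<and> h2_reducing I M (mult_op (phi2 I P U))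
      \<and> M \<noteq> {\<lambda>_ _. 0} \<and> M \<noteq> H2 I"
    using K h2_reducing_H2_coeffs_in_iff[OF assms closed] H2_coeffs_in_nontrivial_iff[OF closed]
    by (intro exI[of _ "H2_coeffs_in I K"]) simp
qed

end
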